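(* Let $d\in\mathbb{N}$ and let $C(d)$ be a constant such that for every Radon log-concave probability measure $\mu$ on a locally convex space $E$, every $f\in\mathcal{P}^d(\mu)$ and every $\varphi\in C_b^\infty(\mathbb{R})$ with $\|\varphi\|_\infty\le1$ one has $\sigma_f^{1/d}\int\varphi'(f)\,d\mu\le C(d)\|\varphi'\|_\infty^{1-1/d}$. Let $\mu$ be a Radon log-concave probability measure on a locally convex space $E$, let $f,g\in\mathcal{P}^d(\mu)$ be functions neither of which coincides a.e. with a constant, let $\rho_f,\rho_g$ be the densities of $\mu\circ f^{-1},\mu\circ g^{-1}$, and let $1<p<\frac{d}{d-1}$. Then $$\|\rho_f-\rho_g\|_{L^p(\mathbb{R})}\le C_1(d,p)\bigl(\sigma_f^{-1/d}+\sigma_g^{-1/d}\bigr)^{d(1-1/p)}\|\mu\circ f^{-1}-\mu\circ g^{-1}\|_{\rm TV}^{1-d(1-1/p)}$$ $$\le C_1(d,p)\bigl(\sigma_f^{-1/d}+\sigma_g^{-1/d}\bigr)^{d(1-1/p)}C_d(\sigma_f,\sigma_g)^{1-d(1-1/p)}\|\mu\circ f^{-1}-\mu\circ g^{-1}\|_{\rm FM}^{\frac{1}{1+d}(1-d(1-1/p))},$$ where $$C_1(d,p)=\Bigl(p(p-1)^{-1}+p\Bigl(\frac{d}{d-1}-p\Bigr)^{-1}\Bigr)^{1/p}C(d)^{d(1-1/p)},$$ $$C_d(\sigma_f,\sigma_g)=2+2C(d)\bigl(\sigma_f^{-1/d}+\sigma_g^{-1/d}\bigr)(2\pi)^{-1/2}\int_{\mathbb{R}}e^{-t^2/2}|t|^{1/d}dt.$$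 (For $d=1$, $\frac{d}{d-1}$ is interpreted as $+\infty$ and the term $p(\frac{d}{d-1}-p)^{-1}$ as $0$.)
   Context: Log-concave measures on $\mathbb{R}^n$: density $e^{-V}$ w.r.t. Lebesgue measure on an affine subspace, $V$ convex with values in $(-\infty,+\infty]$. A Radon probability measure on a locally convex space $E$ is log-concave if all its images under continuous linear maps to $\mathbb{R}^n$ are log-concave. $\mathcal{P}^d(\mu)$: closure in $L^2(\mu)$ of functions $p(\ell_1,\dots,\ell_n)$ with $\ell_i\in E^*$, $p$ a polynomial of degree $d$. $\sigma_f^2=\int(f-\int f\,d\mu)^2d\mu$. For probability measures $\nu_1,\nu_2$ on $\mathbb{R}$: $\|\nu_1-\nu_2\|_{\rm TV}=\sup\{\int\varphi\,d(\nu_1-\nu_2):\varphi\in C_b^\infty(\mathbb{R}),\|\varphi\|_\infty\le1\}$, $\|\nu_1-\nu_2\|_{\rm FM}=\sup\{\int\varphi\,d(\nu_1-\nu_2):\varphi\in C_b^\infty(\mathbb{R}),\|\varphi\|_\infty\le1,\|\varphi'\|_\infty\le1\}$; $C_b^\infty(\mathbb{R})$ is the space of bounded smooth functions with bounded derivatives of all orders. *)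

theory Defs
  imports "HOL-Analysis.Analysis" "HOL-Probability.Probability"
begin

definition lctvs :: "'e::{real_vector,t2_space} itself \<Rightarrow> bool" where
  "lctvs _ \<longleftrightarrow>
     continuous_on UNIV (\<lambda>z::'e \<times> 'e. fst z + snd z) \<and>
     continuous_on UNIV (\<lambda>z::real \<times> 'e. fst z *\<^sub>R snd z) \<and>
     (\<forall>U::'e set. open U \<and> 0 \<in> U \<longrightarrow> (\<exists>W. open W \<and> convex W \<and> 0 \<in> W \<and> W \<subseteq> U))"

definition dual_space :: "('e::{real_vector,t2_space} \<Rightarrow> real) set" where
  "dual_space = {l. linear l \<and> continuous_on UNIV l}"

definition radon :: "'e::t2_space measure \<Rightarrow> bool" where
  "radon M \<longleftrightarrow> sets M = sets borel \<and>
     (\<forall>B\<in>sets borel. emeasure M B = (SUP K\<in>{K. compact K \<and> K \<subseteq> B}. emeasure M K))"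

text \<open>R^n is represented as the functions on {..<n} (extensional), with Lebesgue measure
  PiM {..<n} (\<lambda>_. lborel). A measure on R^n is log-concave if it is the image under an
  injective affine map A : R^k \<rightarrow> R^n (parametrising an affine subspace) of a measure
  with density exp(-V) w.r.t. Lebesgue measure on R^k, V convex with values in (-\<infinity>,+\<infinity>].\<close>
definition lc_fin :: "nat \<Rightarrow> (nat \<Rightarrow> real) measure \<Rightarrow> bool" where
  "lc_fin n \<nu> \<longleftrightarrow>
    (\<exists>k\<le>n. \<exists>(b::nat \<Rightarrow> real) (a::nat \<Rightarrow> nat \<Rightarrow> real) (V::(nat \<Rightarrow> real) \<Rightarrow> ereal).
       (let A = (\<lambda>y. restrict (\<lambda>i. b i + (\<Sum>j<k. a i j * y j)) {..<n}) in
         inj_on A (PiE {..<k} (\<lambda>_. UNIV)) \<and>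
         (\<forall>y\<in>PiE {..<k} (\<lambda>_. UNIV). V y \<noteq> -\<infinity>) \<and>
         (\<forall>y\<in>PiE {..<k} (\<lambda>_. UNIV). \<forall>z\<in>PiE {..<k} (\<lambda>_. UNIV). \<forall>t::real. 0 \<le> t \<and> t \<le> 1 \<longrightarrow>
            V (restrict (\<lambda>j. t * y j + (1 - t) * z j) {..<k})
              \<le> ereal t * V y + ereal (1 - t) * V z) \<and>
         \<nu> = distr (density (PiM {..<k} (\<lambda>_. lborel))
                      (\<lambda>y. if V y = \<infinity> then 0 else ennreal (exp (- real_of_ereal (V y)))))
                   (PiM {..<n} (\<lambda>_. lborel)) A))"

definition log_concave :: "'e::{real_vector,t2_space} measure \<Rightarrow> bool" where
  "log_concave M \<longleftrightarrow> prob_space M \<and>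
     (\<forall>n (l::nat \<Rightarrow> 'e \<Rightarrow> real). (\<forall>i<n. l i \<in> dual_space) \<longrightarrow>
        lc_fin n (distr M (PiM {..<n} (\<lambda>_. lborel)) (\<lambda>x. restrict (\<lambda>i. l i x) {..<n})))"

definition poly_funs :: "nat \<Rightarrow> ('e::{real_vector,t2_space} \<Rightarrow> real) set" where
  "poly_funs d = {f. \<exists>(J::nat set) (c::nat \<Rightarrow> real) (m::nat \<Rightarrow> nat) (l::nat \<Rightarrow> nat \<Rightarrow> 'e \<Rightarrow> real).
      finite J \<and> (\<forall>j\<in>J. m j \<le> d \<and> (\<forall>i<m j. l j i \<in> dual_space)) \<and>
      f = (\<lambda>x. \<Sum>j\<in>J. c j * (\<Prod>i<m j. l j i x))}"

definition Pd :: "'e::{real_vector,t2_space} measure \<Rightarrow> nat \<Rightarrow> ('e \<Rightarrow> real) set" where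
  "Pd M d = {f \<in> borel_measurable M. integrable M (\<lambda>x. (f x)\<^sup>2) \<and>
      (\<exists>p::nat \<Rightarrow> 'e \<Rightarrow> real. (\<forall>k. p k \<in> poly_funs d \<and> integrable M (\<lambda>x. (f x - p k x)\<^sup>2)) \<and>
         (\<lambda>k. \<integral>x. (f x - p k x)\<^sup>2 \<partial>M) \<longlonglongrightarrow> 0)}"

definition sigma_f :: "'e measure \<Rightarrow> ('e \<Rightarrow> real) \<Rightarrow> real" where
  "sigma_f M f = sqrt (\<integral>x. (f x - (\<integral>y. f y \<partial>M))\<^sup>2 \<partial>M)"

definition Cb_inf :: "(real \<Rightarrow> real) \<Rightarrow> bool" where
  "Cb_inf \<phi> \<longleftrightarrow> (\<forall>k. (\<forall>x. ((deriv ^^ k) \<phi>) differentiable (at x)) \<and> bounded (range ((deriv ^^ k) \<phi>)))"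

definition supnorm :: "(real \<Rightarrow> real) \<Rightarrow> real" where
  "supnorm \<phi> = (SUP x. \<bar>\<phi> x\<bar>)"

definition TV_dist :: "real measure \<Rightarrow> real measure \<Rightarrow> real" where
  "TV_dist \<nu>1 \<nu>2 = Sup {(\<integral>x. \<phi> x \<partial>\<nu>1) - (\<integral>x. \<phi> x \<partial>\<nu>2) | \<phi>. Cb_inf \<phi> \<and> (\<forall>x. \<bar>\<phi> x\<bar> \<le> 1)}"

definition FM_dist :: "real measure \<Rightarrow> real measure \<Rightarrow> real" where
  "FM_dist \<nu>1 \<nu>2 = Sup {(\<integral>x. \<phi> x \<partial>\<nu>1) - (\<integral>x. \<phi> x \<partial>\<nu>2) | \<phi>.
      Cb_inf \<phi> \<and> (\<forall>x. \<bar>\<phi> x\<bar> \<le> 1) \<and> (\<forall>x. \<bar>deriv \<phi> x\<bar> \<le> 1)}"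

end

theory Submission
  imports Defs
begin

text \<open>Let \<open>\<rho>\<close> be the density of \<open>\<mu> \<circ> f\<^sup>-\<^sup>1\<close> and \<open>K\<^sub>f = C(d) \<sigma>\<^sub>f\<^sup>-\<^sup>1\<^sup>/\<^sup>d\<close>. Tested against primitives of
  smoothed indicators, the hypothesis on \<open>C(d)\<close> gives \<open>\<integral>\<^sub>A \<rho> \<le> K\<^sub>f (\<bar>A\<bar>/2)\<^sup>1\<^sup>/\<^sup>d\<close>, first for finite
  unions of intervals and then for every set of finite measure. For \<open>h = \<bar>\<rho>\<^sub>f - \<rho>\<^sub>g\<bar>\<close> this yields
  \<open>s \<bar>{h \<ge> s}\<bar> \<le> (K\<^sub>f + K\<^sub>g) \<bar>{h \<ge> s}\<bar>\<^sup>1\<^sup>/\<^sup>d\<close>, which bounds the large levels of \<open>h\<close>; Markov's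
  inequality bounds the small ones, and the layer cake formula turns both into a bound on
  \<open>\<integral> h\<^sup>p\<close> by a power of \<open>\<integral> h \<le> \<parallel>\<mu> \<circ> f\<^sup>-\<^sup>1 - \<mu> \<circ> g\<^sup>-\<^sup>1\<parallel>\<^sub>T\<^sub>V\<close>.

  For the comparison of the two distances, a test function \<open>\<phi>\<close> is split into its average over
  windows of length \<open>\<epsilon>\<close>, whose derivative is \<open>O(1/\<epsilon>)\<close> and which is therefore controlled by the
  Fortet--Mourier distance, and the derivative of a function of size \<open>\<epsilon>/2\<close>, which the hypothesis
  on \<open>C(d)\<close> controls by \<open>O(\<epsilon>\<^sup>1\<^sup>/\<^sup>d)\<close>; choosing \<open>\<epsilon>\<close> optimally gives the exponent \<open>1/(1+d)\<close>.\<close>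

section \<open>Smooth functions with bounded derivatives\<close>

text \<open>\<open>Cb_inf \<phi>\<close> is \<open>\<forall>k. Cb_upto k \<phi>\<close>; the finite stages make the closure properties provable
  by induction on \<open>k\<close>.\<close>
definition Cb_upto :: "nat \<Rightarrow> (real \<Rightarrow> real) \<Rightarrow> bool" where
  "Cb_upto k \<phi> \<longleftrightarrow>
     (\<forall>j\<le>k. (\<forall>x. (deriv ^^ j) \<phi> differentiable (at x)) \<and> bounded (range ((deriv ^^ j) \<phi>)))"

lemma Cb_inf_iff_Cb_upto: "Cb_inf \<phi> \<longleftrightarrow> (\<forall>k. Cb_upto k \<phi>)"
  unfolding Cb_inf_def Cb_upto_def by blast

lemma Cb_upto_0: "Cb_upto 0 \<phi> \<longleftrightarrow> (\<forall>x. \<phi> differentiable (at x)) \<and> bounded (range \<phi>)"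
  unfolding Cb_upto_def by auto

lemma Cb_upto_Suc:
  "Cb_upto (Suc k) \<phi> \<longleftrightarrow> (\<forall>x. \<phi> differentiable (at x)) \<and> bounded (range \<phi>) \<and> Cb_upto k (deriv \<phi>)"
proof -
  have "(\<forall>j\<le>Suc k. P j) \<longleftrightarrow> P 0 \<and> (\<forall>j\<le>k. P (Suc j))" for P
    by (metis less_eq_nat.simps(2) not0_implies_Suc Suc_le_mono le0)
  then show ?thesis
    unfolding Cb_upto_def by (simp only: funpow_Suc_right o_def funpow_0 conj_assoc)
qed

lemma Cb_upto_SucD: "Cb_upto (Suc k) \<phi> \<Longrightarrow> Cb_upto k \<phi>"
  unfolding Cb_upto_def by auto

lemma Cb_upto_bounded: "Cb_upto k \<phi> \<Longrightarrow> bounded (range \<phi>)"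
  unfolding Cb_upto_def by (metis funpow_0 le0)

lemma Cb_upto_has_real_derivative: "Cb_upto k \<phi> \<Longrightarrow> (\<phi> has_real_derivative deriv \<phi> x) (at x)"
  unfolding Cb_upto_def by (metis DERIV_deriv_iff_real_differentiable funpow_0 le0)

lemma deriv_eqI: "(\<And>x. (f has_real_derivative f' x) (at x)) \<Longrightarrow> deriv f = f'"
  by (rule ext) (rule DERIV_imp_deriv)

lemma Cb_upto_SucI:
  assumes "\<And>x. (f has_real_derivative f' x) (at x)" "bounded (range f)" "Cb_upto k f'"
  shows "Cb_upto (Suc k) f"
  using assms deriv_eqI[OF assms(1)] by (auto simp: Cb_upto_Suc real_differentiable_def)

lemma bounded_range_real_iff: "bounded (range (f::'a\<Rightarrow>real)) \<longleftrightarrow> (\<exists>B. \<forall>x. \<bar>f x\<bar> \<le> B)"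
  unfolding bounded_iff by auto

lemma bounded_range_mult:
  "bounded (range (f::'a\<Rightarrow>real)) \<Longrightarrow> bounded (range g) \<Longrightarrow> bounded (range (\<lambda>x. f x * g x))"
  unfolding bounded_range_real_iff abs_mult by (meson abs_ge_zero mult_mono order_trans)

lemma bounded_range_cmult: "bounded (range (f::'a\<Rightarrow>real)) \<Longrightarrow> bounded (range (\<lambda>x. c * f x))"
  by (rule bounded_range_mult) (auto simp: bounded_range_real_iff)

lemma Cb_upto_const: "Cb_upto k (\<lambda>x. c)"
proof (induction k arbitrary: c)
  case 0 then show ?case by (simp add: Cb_upto_0)
next
  case (Suc k) show ?case
    by (rule Cb_upto_SucI[where f'="\<lambda>x. 0"]) (auto intro!: derivative_eq_intros Suc)
qed

lemma Cb_upto_add: "Cb_upto k f \<Longrightarrow> Cb_upto k g \<Longrightarrow> Cb_upto k (\<lambda>x. f x + g x)"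
proof (induction k arbitrary: f g)
  case 0 then show ?case unfolding Cb_upto_0 by (auto intro: bounded_plus_comp)
next
  case (Suc k)
  show ?case
  proof (rule Cb_upto_SucI[where f'="\<lambda>x. deriv f x + deriv g x"])
    show "((\<lambda>x. f x + g x) has_real_derivative deriv f x + deriv g x) (at x)" for x
      using Suc.prems by (auto intro!: derivative_eq_intros Cb_upto_has_real_derivative)
    show "bounded (range (\<lambda>x. f x + g x))"
      using Suc.prems by (intro bounded_plus_comp Cb_upto_bounded)
    show "Cb_upto k (\<lambda>x. deriv f x + deriv g x)"
      using Suc by (simp add: Cb_upto_Suc)
  qed
qed

lemma Cb_upto_cmult: "Cb_upto k f \<Longrightarrow> Cb_upto k (\<lambda>x. c * f x)"
proof (induction k arbitrary: f)
  case 0 then show ?case unfolding Cb_upto_0 using bounded_range_cmult by auto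
next
  case (Suc k)
  show ?case
  proof (rule Cb_upto_SucI[where f'="\<lambda>x. c * deriv f x"])
    show "((\<lambda>x. c * f x) has_real_derivative c * deriv f x) (at x)" for x
      using Suc.prems by (auto intro!: derivative_eq_intros Cb_upto_has_real_derivative)
    show "bounded (range (\<lambda>x. c * f x))"
      using Suc.prems by (intro bounded_range_cmult Cb_upto_bounded)
    show "Cb_upto k (\<lambda>x. c * deriv f x)"
      using Suc by (simp add: Cb_upto_Suc)
  qed
qed

lemma Cb_upto_mult: "Cb_upto k f \<Longrightarrow> Cb_upto k g \<Longrightarrow> Cb_upto k (\<lambda>x. f x * g x)"
proof (induction k arbitrary: f g)
  case 0 then show ?case unfolding Cb_upto_0 using bounded_range_mult by auto
next
  case (Suc k)
  show ?case
  proof (rule Cb_upto_SucI[where f'="\<lambda>x. deriv f x * g x + f x * deriv g x"])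
    show "((\<lambda>x. f x * g x) has_real_derivative deriv f x * g x + f x * deriv g x) (at x)" for x
      using Suc.prems by (auto intro!: derivative_eq_intros Cb_upto_has_real_derivative)
    show "bounded (range (\<lambda>x. f x * g x))"
      using Suc.prems by (intro bounded_range_mult Cb_upto_bounded)
    show "Cb_upto k (\<lambda>x. deriv f x * g x + f x * deriv g x)"
      using Suc Cb_upto_SucD by (intro Cb_upto_add) (auto simp: Cb_upto_Suc)
  qed
qed

lemma Cb_upto_sum:
  "finite J \<Longrightarrow> (\<And>j. j \<in> J \<Longrightarrow> Cb_upto k (f j)) \<Longrightarrow> Cb_upto k (\<lambda>x. \<Sum>j\<in>J. f j x)"
  by (induction J rule: finite_induct) (auto intro: Cb_upto_const Cb_upto_add)

lemma Cb_upto_affine_comp: "Cb_upto k f \<Longrightarrow> Cb_upto k (\<lambda>x. f (a * x + b))"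
proof (induction k arbitrary: f)
  case 0
  have "((\<lambda>x. f (a * x + b)) has_real_derivative deriv f (a * x + b) * a) (at x)" for x
    by (rule DERIV_chain2[OF Cb_upto_has_real_derivative[OF 0]]) (auto intro!: derivative_eq_intros)
  then show ?case
    using Cb_upto_bounded[OF 0] by (auto simp: Cb_upto_0 real_differentiable_def bounded_range_real_iff)
next
  case (Suc k)
  show ?case
  proof (rule Cb_upto_SucI[where f'="\<lambda>x. a * deriv f (a * x + b)"])
    have "((\<lambda>x. f (a * x + b)) has_real_derivative deriv f (a * x + b) * a) (at x)" for x
      by (rule DERIV_chain2[OF Cb_upto_has_real_derivative[OF Suc.prems]])
        (auto intro!: derivative_eq_intros)
    then show "((\<lambda>x. f (a * x + b)) has_real_derivative a * deriv f (a * x + b)) (at x)" for x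
      by (metis mult.commute)
    show "bounded (range (\<lambda>x. f (a * x + b)))"
      using Cb_upto_bounded[OF Suc.prems] by (auto simp: bounded_range_real_iff)
    show "Cb_upto k (\<lambda>x. a * deriv f (a * x + b))"
      using Suc.prems Suc.IH by (intro Cb_upto_cmult) (simp add: Cb_upto_Suc)
  qed
qed

lemma abs_tanh_le_1: "\<bar>tanh (x::real)\<bar> \<le> 1"
  using tanh_real_lt_1[of x] tanh_real_gt_neg1[of x] by (simp add: abs_le_iff less_imp_le)

lemma tanh_real_has_derivative: "(tanh has_real_derivative 1 - tanh x * tanh x) (at (x::real))"
  using has_field_derivative_tanh[where g="\<lambda>x. x" and Db=1 and x=x and s=UNIV] cosh_real_pos[of x]
  by (simp add: power2_eq_square)

lemma Cb_upto_tanh: "Cb_upto k tanh"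
proof (induction k)
  case 0
  show ?case
    using tanh_real_has_derivative abs_tanh_le_1
    by (auto simp: Cb_upto_0 real_differentiable_def bounded_range_real_iff)
next
  case (Suc k)
  show ?case
  proof (rule Cb_upto_SucI[OF tanh_real_has_derivative])
    show "bounded (range (tanh::real\<Rightarrow>real))"
      using Suc Cb_upto_bounded by blast
    show "Cb_upto k (\<lambda>x. 1 - tanh x * tanh x)"
      using Cb_upto_add[OF Cb_upto_const Cb_upto_cmult[OF Cb_upto_mult[OF Suc Suc], of "-1"], of 1]
      by simp
  qed
qed

lemma Cb_inf_cmult: "Cb_inf f \<Longrightarrow> Cb_inf (\<lambda>x. c * f x)"
  unfolding Cb_inf_iff_Cb_upto by (auto intro: Cb_upto_cmult)

lemma Cb_inf_has_real_derivative: "Cb_inf f \<Longrightarrow> (f has_real_derivative deriv f x) (at x)"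
  unfolding Cb_inf_iff_Cb_upto by (auto intro: Cb_upto_has_real_derivative)

lemma Cb_inf_deriv_cmult: "Cb_inf f \<Longrightarrow> deriv (\<lambda>x. c * f x) = (\<lambda>x. c * deriv f x)"
  by (rule deriv_eqI) (rule DERIV_cmult[OF Cb_inf_has_real_derivative])

lemma Cb_upto_borel_measurable: "Cb_upto k g \<Longrightarrow> g \<in> borel_measurable borel"
  by (intro borel_measurable_continuous_onI differentiable_imp_continuous_on)
     (auto simp: differentiable_on_def Cb_upto_def intro: differentiable_at_withinI)

lemma Cb_inf_borel_measurable: "Cb_inf g \<Longrightarrow> g \<in> borel_measurable borel"
  unfolding Cb_inf_iff_Cb_upto using Cb_upto_borel_measurable by blast

lemma Cb_inf_deriv_borel_measurable: "Cb_inf g \<Longrightarrow> deriv g \<in> borel_measurable borel"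
  unfolding Cb_inf_iff_Cb_upto by (meson Cb_upto_Suc Cb_upto_borel_measurable)

lemma Cb_inf_continuous: "Cb_inf \<phi> \<Longrightarrow> continuous_on UNIV \<phi>"
  by (meson Cb_inf_has_real_derivative DERIV_isCont continuous_at_imp_continuous_on)

lemma supnorm_le: "(\<And>x. \<bar>g x\<bar> \<le> D) \<Longrightarrow> supnorm g \<le> D"
  unfolding supnorm_def by (rule cSUP_least) auto

lemma abs_le_supnorm: "bounded (range g) \<Longrightarrow> \<bar>g x\<bar> \<le> supnorm g"
  unfolding supnorm_def bounded_range_real_iff by (auto intro!: cSUP_upper bdd_aboveI2)

lemma DERIV_abs_bound:
  fixes F :: "real \<Rightarrow> real"
  assumes "\<And>x. (F has_real_derivative f x) (at x)" "\<And>x. \<bar>f x\<bar> \<le> B"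
  shows "\<bar>F y - F x\<bar> \<le> B * \<bar>y - x\<bar>"
  using field_differentiable_bound[of UNIV F f B y x] assms by auto

section \<open>Smoothed indicators of grid cells\<close>

text \<open>As \<open>\<delta> \<rightarrow> 0\<close>, \<open>tanh_bump w \<delta> j\<close> tends to the indicator of the cell \<open>]jw, (j+1)w[\<close>;
  its primitive is built from \<open>ln cosh\<close>, whose derivative \<open>tanh\<close> has absolute value at most 1.\<close>
definition tanh_bump :: "real \<Rightarrow> real \<Rightarrow> int \<Rightarrow> real \<Rightarrow> real" where
  "tanh_bump w \<delta> j x = (tanh ((x - j*w)/\<delta>) - tanh ((x - (j+1)*w)/\<delta>)) / 2"

definition grid_bump :: "int set \<Rightarrow> real \<Rightarrow> real \<Rightarrow> real \<Rightarrow> real" where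
  "grid_bump J w \<delta> x = (\<Sum>j\<in>J. tanh_bump w \<delta> j x)"

definition tanh_bump_primitive :: "real \<Rightarrow> real \<Rightarrow> int \<Rightarrow> real \<Rightarrow> real" where
  "tanh_bump_primitive w \<delta> j x = \<delta> * (ln (cosh ((x - j*w)/\<delta>)) - ln (cosh ((x - (j+1)*w)/\<delta>))) / 2"

definition grid_bump_primitive :: "int set \<Rightarrow> real \<Rightarrow> real \<Rightarrow> real \<Rightarrow> real" where
  "grid_bump_primitive J w \<delta> x = (\<Sum>j\<in>J. tanh_bump_primitive w \<delta> j x)"

definition grid_union :: "int set \<Rightarrow> real \<Rightarrow> real set" where
  "grid_union J w = (\<Union>j\<in>J. {real_of_int j*w <..< real_of_int (j+1)*w})"

lemma ln_cosh_has_real_derivative: "((\<lambda>u. ln (cosh u)) has_real_derivative tanh u) (at u)"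
  unfolding tanh_def by (auto intro!: derivative_eq_intros simp: cosh_real_pos)

lemma Cb_upto_tanh_bump: "Cb_upto k (tanh_bump w \<delta> j)"
proof -
  have "tanh_bump w \<delta> j = (\<lambda>x. 1/2 * tanh ((1/\<delta>) * x + (- (j*w)/\<delta>))
                              + (-1/2) * tanh ((1/\<delta>) * x + (- ((j+1)*w)/\<delta>)))"
    by (rule ext) (simp add: tanh_bump_def diff_divide_distrib)
  then show ?thesis
    by (simp only:) (intro Cb_upto_add Cb_upto_cmult Cb_upto_affine_comp Cb_upto_tanh)
qed

lemma Cb_upto_grid_bump: "finite J \<Longrightarrow> Cb_upto k (grid_bump J w \<delta>)"
  unfolding grid_bump_def[abs_def] by (intro Cb_upto_sum Cb_upto_tanh_bump)

lemma tanh_bump_primitive_has_real_derivative: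
  assumes "\<delta> \<noteq> 0"
  shows "(tanh_bump_primitive w \<delta> j has_real_derivative tanh_bump w \<delta> j x) (at x)"
proof -
  have shifted: "((\<lambda>x. ln (cosh ((x - c)/\<delta>))) has_real_derivative tanh ((x - c)/\<delta>) * (1/\<delta>)) (at x)" for c
    by (rule DERIV_chain2[OF ln_cosh_has_real_derivative]) (use assms in \<open>auto intro!: derivative_eq_intros\<close>)
  have "tanh_bump_primitive w \<delta> j
     = (\<lambda>x. \<delta>/2 * (ln (cosh ((x - j*w)/\<delta>)) - ln (cosh ((x - (j+1)*w)/\<delta>))))"
    by (rule ext) (simp add: tanh_bump_primitive_def)
  then show ?thesis
    by (simp only:) (rule DERIV_cong[OF DERIV_cmult[OF DERIV_diff[OF shifted shifted]]],
      use assms in \<open>simp add: tanh_bump_def field_simps\<close>)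
qed

lemma grid_bump_primitive_has_real_derivative:
  "\<delta> \<noteq> 0 \<Longrightarrow> (grid_bump_primitive J w \<delta> has_real_derivative grid_bump J w \<delta> x) (at x)"
  unfolding grid_bump_primitive_def[abs_def] grid_bump_def
  by (rule DERIV_sum) (rule tanh_bump_primitive_has_real_derivative)

lemma deriv_grid_bump_primitive: "\<delta> \<noteq> 0 \<Longrightarrow> deriv (grid_bump_primitive J w \<delta>) = grid_bump J w \<delta>"
  by (rule deriv_eqI) (rule grid_bump_primitive_has_real_derivative)

lemma abs_tanh_bump_primitive_le:
  assumes "\<delta> > 0" "w \<ge> 0"
  shows "\<bar>tanh_bump_primitive w \<delta> j x\<bar> \<le> w / 2"
proof -
  have "\<bar>ln (cosh ((x - j*w)/\<delta>)) - ln (cosh ((x - (j+1)*w)/\<delta>))\<bar>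
        \<le> 1 * \<bar>(x - j*w)/\<delta> - (x - (j+1)*w)/\<delta>\<bar>"
    by (rule DERIV_abs_bound[OF ln_cosh_has_real_derivative abs_tanh_le_1])
  also have "\<dots> = w / \<delta>" using assms by (simp add: field_simps)
  finally have "\<delta> * \<bar>ln (cosh ((x - j*w)/\<delta>)) - ln (cosh ((x - (j+1)*w)/\<delta>))\<bar> \<le> w"
    using assms by (simp add: pos_le_divide_eq mult.commute)
  then show ?thesis
    using assms unfolding tanh_bump_primitive_def by (simp add: abs_mult)
qed

lemma abs_grid_bump_primitive_le:
  assumes "\<delta> > 0" "w \<ge> 0"
  shows "\<bar>grid_bump_primitive J w \<delta> x\<bar> \<le> real (card J) * w / 2"
proof -
  have "\<bar>grid_bump_primitive J w \<delta> x\<bar> \<le> (\<Sum>j\<in>J. \<bar>tanh_bump_primitive w \<delta> j x\<bar>)"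
    unfolding grid_bump_primitive_def by (rule sum_abs)
  also have "\<dots> \<le> (\<Sum>j\<in>J. w / 2)" by (intro sum_mono abs_tanh_bump_primitive_le assms)
  finally show ?thesis by simp
qed

lemma Cb_inf_grid_bump_primitive:
  assumes J: "finite J" and "\<delta> > 0" "w \<ge> 0"
  shows "Cb_inf (grid_bump_primitive J w \<delta>)"
  unfolding Cb_inf_iff_Cb_upto
proof
  fix k
  have "Cb_upto (Suc k) (grid_bump_primitive J w \<delta>)"
  proof (rule Cb_upto_SucI[OF grid_bump_primitive_has_real_derivative _ Cb_upto_grid_bump[OF J]])
    show "bounded (range (grid_bump_primitive J w \<delta>))"
      unfolding bounded_range_real_iff using abs_grid_bump_primitive_le assms by blast
  qed (use assms in auto)
  then show "Cb_upto k (grid_bump_primitive J w \<delta>)" by (rule Cb_upto_SucD)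
qed

lemma tanh_bump_nonneg: "\<delta> > 0 \<Longrightarrow> w \<ge> 0 \<Longrightarrow> tanh_bump w \<delta> j x \<ge> 0"
  unfolding tanh_bump_def by (simp add: divide_right_mono algebra_simps)

lemma sum_tanh_bump_telescope:
  "(\<Sum>i<n. tanh_bump w \<delta> (lo + int i) x)
     = (tanh ((x - real_of_int lo*w)/\<delta>) - tanh ((x - real_of_int (lo + int n)*w)/\<delta>)) / 2"
proof (induction n)
  case (Suc n)
  have "real_of_int (lo + int n) + 1 = real_of_int (lo + int (Suc n))" by simp
  then show ?case using Suc unfolding sum.lessThan_Suc tanh_bump_def by (simp add: diff_divide_distrib)
qed simp

lemma grid_bump_nonneg: "\<delta> > 0 \<Longrightarrow> w \<ge> 0 \<Longrightarrow> grid_bump J w \<delta> x \<ge> 0"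
  unfolding grid_bump_def by (intro sum_nonneg tanh_bump_nonneg)

text \<open>The bumps telescope, so on any block of consecutive indices their sum is a difference
  of two values of tanh.\<close>
lemma grid_bump_le_1:
  assumes J: "finite J" and "\<delta> > 0" "w \<ge> 0"
  shows "grid_bump J w \<delta> x \<le> 1"
proof -
  define N where "N = nat (Max (insert 0 (abs ` J))) + 1"
  have N: "J \<subseteq> {-int N..<int N}"
  proof
    fix j assume "j \<in> J"
    then have "\<bar>j\<bar> \<le> Max (insert 0 (abs ` J))" using J by (intro Max_ge) auto
    then show "j \<in> {-int N..<int N}" unfolding N_def by auto
  qed
  have block: "{-int N..<int N} = (\<lambda>i. - int N + int i) ` {..<2*N}"
  proof
    show "{-int N..<int N} \<subseteq> (\<lambda>i. - int N + int i) ` {..<2*N}"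
    proof
      fix j assume "j \<in> {-int N..<int N}"
      then have "j = - int N + int (nat (j + int N))" "nat (j + int N) < 2*N" by auto
      then show "j \<in> (\<lambda>i. - int N + int i) ` {..<2*N}" by blast
    qed
  qed auto
  have "grid_bump J w \<delta> x \<le> (\<Sum>j\<in>{-int N..<int N}. tanh_bump w \<delta> j x)"
    unfolding grid_bump_def by (rule sum_mono2) (use N tanh_bump_nonneg assms in auto)
  also have "\<dots> = (\<Sum>i<2*N. tanh_bump w \<delta> (- int N + int i) x)"
    unfolding block by (subst sum.reindex) (auto simp: inj_on_def)
  also have "\<dots> \<le> 1"
    unfolding sum_tanh_bump_telescope
    using abs_tanh_le_1[of "(x - (- int N)*w)/\<delta>"] abs_tanh_le_1[of "(x - (- int N + int (2*N))*w)/\<delta>"]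
    by (simp add: abs_le_iff)
  finally show ?thesis .
qed

lemma integral_le_of_dominated_limit:
  fixes f :: "nat \<Rightarrow> 'a \<Rightarrow> real"
  assumes "integrable M w" "\<And>n. f n \<in> borel_measurable M" "g \<in> borel_measurable M"
    and "AE x in M. (\<lambda>n. f n x) \<longlonglongrightarrow> g x" "\<And>n. AE x in M. norm (f n x) \<le> w x"
    and "\<And>n. (\<integral>x. f n x \<partial>M) \<le> c"
  shows "(\<integral>x. g x \<partial>M) \<le> c"
  by (rule LIMSEQ_le_const2[OF integral_dominated_convergence[OF assms(3,2,1,4,5)]])
    (use assms(6) in auto)

lemma tendsto_tanh_scaled: "c \<noteq> 0 \<Longrightarrow> (\<lambda>n. tanh (c * (real n + 1))) \<longlonglongrightarrow> sgn c"
proof -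
  have lim_pos: "(\<lambda>n. tanh (c * (real n + 1))) \<longlonglongrightarrow> 1" if "c > 0" for c :: real
  proof -
    have "filterlim (\<lambda>n. 1 + real n) at_top sequentially"
      by (rule filterlim_tendsto_add_at_top[OF tendsto_const filterlim_real_sequentially])
    then have "filterlim (\<lambda>n. real n + 1) at_top sequentially"
      by (simp add: add.commute)
    then have "filterlim (\<lambda>n. c * (real n + 1)) at_top sequentially"
      using filterlim_tendsto_pos_mult_at_top[OF tendsto_const that] by blast
    then show ?thesis by (rule filterlim_compose[OF tanh_real_at_top])
  qed
  assume "c \<noteq> 0"
  then consider "c > 0" | "-c > 0" by linarith
  then show ?thesis
    by cases (use lim_pos tendsto_minus[OF lim_pos[of "-c"]] in auto)
qed

lemma tendsto_tanh_bump:
  assumes w: "w > 0" and x: "\<forall>i::int. x \<noteq> real_of_int i * w"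
  shows "(\<lambda>n. tanh_bump w (1 / (real n + 1)) j x) \<longlonglongrightarrow> indicator {real_of_int j*w <..< real_of_int (j+1)*w} x"
proof -
  have a: "x - real_of_int j*w \<noteq> 0" and b: "x - real_of_int (j+1)*w \<noteq> 0"
    using x[rule_format, of j] x[rule_format, of "j+1"] by auto
  have "tanh_bump w (1 / (real n + 1)) j x = (tanh ((x - real_of_int j*w) * (real n + 1))
          - tanh ((x - real_of_int (j+1)*w) * (real n + 1))) / 2" for n
    unfolding tanh_bump_def by simp
  then have "(\<lambda>n. tanh_bump w (1 / (real n + 1)) j x)
    \<longlonglongrightarrow> (sgn (x - real_of_int j*w) - sgn (x - real_of_int (j+1)*w)) / 2"
    by (simp only:) (intro tendsto_divide tendsto_diff tendsto_tanh_scaled a b tendsto_const, simp)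
  also have "(sgn (x - real_of_int j*w) - sgn (x - real_of_int (j+1)*w)) / 2
           = indicator {real_of_int j*w <..< real_of_int (j+1)*w} x"
    using a b w by (auto simp: indicator_def sgn_if algebra_simps)
  finally show ?thesis .
qed

lemma disjoint_family_on_grid_cells:
  "w > 0 \<Longrightarrow> disjoint_family_on (\<lambda>j::int. {real_of_int j*w <..< real_of_int (j+1)*w}) J"
  unfolding disjoint_family_on_def
proof (intro ballI impI)
  fix j k :: int assume "w > 0" "j \<noteq> k"
  then have "real_of_int (j+1) * w \<le> real_of_int k * w \<or> real_of_int (k+1) * w \<le> real_of_int j * w"
    by (smt (verit) mult_right_mono of_int_le_iff)
  then show "{real_of_int j*w <..< real_of_int (j+1)*w} \<inter> {real_of_int k*w <..< real_of_int (k+1)*w} = {}"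
    by auto
qed

lemma indicator_grid_union:
  "finite J \<Longrightarrow> w > 0 \<Longrightarrow>
     indicator (grid_union J w) x = (\<Sum>j\<in>J. indicator {real_of_int j*w <..< real_of_int (j+1)*w} x :: real)"
  unfolding grid_union_def by (rule indicator_UN_disjoint[OF _ disjoint_family_on_grid_cells])

lemma grid_union_borel [measurable]: "grid_union J w \<in> sets borel"
  unfolding grid_union_def by (intro borel_open open_UN) auto

lemma measure_grid_union:
  assumes J: "finite J" and w: "w > 0"
  shows "measure lborel (grid_union J w) = real (card J) * w"
proof -
  have "measure lborel (grid_union J w) = (\<Sum>j\<in>J. measure lborel {real_of_int j*w <..< real_of_int (j+1)*w})"
    unfolding grid_union_def
    by (rule measure_finite_Union[OF J _ disjoint_family_on_grid_cells[OF w]])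
      (use w in \<open>auto simp: mult_right_mono\<close>)
  also have "\<dots> = (\<Sum>j\<in>J. w)"
    using w by (intro sum.cong) (auto simp: algebra_simps)
  finally show ?thesis by simp
qed

lemma AE_not_on_grid: "AE x in lborel. \<forall>i::int. x \<noteq> real_of_int i * w"
proof -
  have "range (\<lambda>i::int. real_of_int i * w) \<in> null_sets lborel"
    by (rule countable_imp_null_set_lborel) simp
  from AE_not_in[OF this] show ?thesis by (rule AE_mp) auto
qed

lemma AE_not_on_dyadic_grid: "AE x in lborel. \<forall>n::nat. \<forall>i::int. x \<noteq> real_of_int i * (1/2)^n"
proof -
  have "(\<Union>n::nat. range (\<lambda>i::int. real_of_int i * (1/2)^n)) \<in> null_sets lborel"
    by (rule countable_imp_null_set_lborel) simp
  from AE_not_in[OF this] show ?thesis by (rule AE_mp) auto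
qed

lemma tendsto_grid_bump:
  assumes "finite J" "w > 0" "\<forall>i::int. x \<noteq> real_of_int i * w"
  shows "(\<lambda>n. grid_bump J w (1 / (real n + 1)) x) \<longlonglongrightarrow> indicator (grid_union J w) x"
  unfolding grid_bump_def indicator_grid_union[OF assms(1,2)]
  by (intro tendsto_sum tendsto_tanh_bump assms)

text \<open>Dyadic cells of level \<open>n\<close> whose closure lies in \<open>U\<close>; the index bound keeps the family
  finite while still exhausting \<open>U\<close> as \<open>n \<rightarrow> \<infinity>\<close>.\<close>
definition dyadic_cells :: "real set \<Rightarrow> nat \<Rightarrow> int set" where
  "dyadic_cells U n = {j \<in> {- int (n * 2^n) .. int (n * 2^n)}.
      {real_of_int j * (1/2)^n .. real_of_int (j+1) * (1/2)^n} \<subseteq> U}"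

lemma finite_dyadic_cells: "finite (dyadic_cells U n)"
  unfolding dyadic_cells_def by (rule finite_subset[of _ "{- int (n * 2^n) .. int (n * 2^n)}"]) auto

lemma grid_union_dyadic_cells_subset: "grid_union (dyadic_cells U n) ((1/2)^n) \<subseteq> U"
  unfolding grid_union_def dyadic_cells_def by auto

lemma mem_grid_union_dyadic_cells:
  assumes U: "ball x r \<subseteq> U" and n: "(1/2)^n < r" "\<bar>x\<bar> + 1 \<le> real n"
    and x: "\<forall>i::int. x \<noteq> real_of_int i * (1/2)^n"
  shows "x \<in> grid_union (dyadic_cells U n) ((1/2)^n)"
proof -
  define w :: real where "w = (1/2)^n"
  define j where "j = \<lfloor>x / w\<rfloor>"
  have w: "w > 0" unfolding w_def by simp
  have j: "real_of_int j \<le> x / w" "x / w < real_of_int j + 1" unfolding j_def by linarith+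
  then have "real_of_int j * w \<le> x" and jx2: "x < real_of_int (j+1) * w"
    using w by (auto simp: field_simps)
  moreover have "x \<noteq> real_of_int j * w" using x unfolding w_def by blast
  ultimately have jx: "real_of_int j * w < x" "x < real_of_int (j+1) * w" by auto
  have "{real_of_int j * w .. real_of_int (j+1) * w} \<subseteq> ball x r"
    using jx n(1) unfolding w_def by (auto simp: dist_real_def algebra_simps)
  moreover have "\<bar>x / w\<bar> \<le> real n * 2^n - 1"
  proof -
    have "\<bar>x / w\<bar> = \<bar>x\<bar> * 2^n" unfolding w_def by (simp add: abs_divide power_one_over abs_mult)
    also have "\<dots> \<le> (real n - 1) * 2^n" using n(2) by (intro mult_right_mono) auto
    also have "\<dots> \<le> real n * 2^n - 1" using one_le_power[of "2::real" n] by (simp add: algebra_simps)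
    finally show ?thesis .
  qed
  then have "\<bar>x / w\<bar> \<le> real_of_int (int (n * 2^n)) - 1" by simp
  then have "\<bar>j\<bar> \<le> int (n * 2^n)"
    using j unfolding abs_le_iff of_int_le_iff[symmetric] by linarith
  ultimately have "j \<in> dyadic_cells U n" using U unfolding dyadic_cells_def w_def by auto
  then show ?thesis unfolding grid_union_def using jx w_def by auto
qed

lemma tendsto_indicator_dyadic_cells:
  assumes U: "open U" and x: "\<forall>n::nat. \<forall>i::int. x \<noteq> real_of_int i * (1/2)^n"
  shows "(\<lambda>n. indicator (grid_union (dyadic_cells U n) ((1/2)^n)) x :: real) \<longlonglongrightarrow> indicator U x"
proof (cases "x \<in> U")
  case False
  then have "x \<notin> grid_union (dyadic_cells U n) ((1/2)^n)" for n
    using grid_union_dyadic_cells_subset by blast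
  then show ?thesis using False by simp
next
  case True
  obtain r where r: "r > 0" "ball x r \<subseteq> U" using U True open_contains_ball by blast
  obtain N1 :: nat where N1: "(1/2)^N1 < r" using real_arch_pow_inv[OF r(1), of "1/2"] by auto
  obtain N2 :: nat where N2: "\<bar>x\<bar> + 1 \<le> real N2" using real_arch_simple by blast
  have "(1/2::real)^n < r" "\<bar>x\<bar> + 1 \<le> real n" if "max N1 N2 \<le> n" for n
  proof -
    have "(1/2::real)^n \<le> (1/2)^N1" using that by (intro power_decreasing) auto
    then show "(1/2::real)^n < r" using N1 by linarith
  qed (use that N2 in auto)
  then have "eventually (\<lambda>n. x \<in> grid_union (dyadic_cells U n) ((1/2)^n)) sequentially"
    unfolding eventually_sequentially using mem_grid_union_dyadic_cells[OF r(2)] x by blast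
  then show ?thesis using True by (simp add: tendsto_eventually eventually_mono)
qed

section \<open>Mass bounds for densities satisfying the derivative inequality\<close>

text \<open>The hypothesis on \<open>C(d)\<close>, transported to the density \<open>\<rho>\<close> of an image measure
  \<open>\<mu> \<circ> f\<^sup>-\<^sup>1\<close>; then \<open>K = C(d) \<sigma>\<^sub>f\<^sup>-\<^sup>1\<^sup>/\<^sup>d\<close>.\<close>
definition density_deriv_bound :: "(real \<Rightarrow> real) \<Rightarrow> real \<Rightarrow> nat \<Rightarrow> bool" where
  "density_deriv_bound \<rho> K d \<longleftrightarrow> (\<forall>\<theta>. Cb_inf \<theta> \<and> (\<forall>x. \<bar>\<theta> x\<bar> \<le> 1) \<longrightarrow>
      (\<integral>t. \<rho> t * deriv \<theta> t \<partial>lborel) \<le> K * supnorm (deriv \<theta>) powr (1 - 1/real d))"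

lemma density_deriv_boundD:
  "density_deriv_bound \<rho> K d \<Longrightarrow> Cb_inf \<theta> \<Longrightarrow> (\<And>x. \<bar>\<theta> x\<bar> \<le> 1) \<Longrightarrow>
     (\<integral>t. \<rho> t * deriv \<theta> t \<partial>lborel) \<le> K * supnorm (deriv \<theta>) powr (1 - 1/real d)"
  unfolding density_deriv_bound_def by blast

lemma density_deriv_bound_nonneg:
  assumes "density_deriv_bound \<rho> K d"
  shows "K \<ge> 0"
proof -
  have tanh: "Cb_inf tanh" "\<And>x. \<bar>tanh x\<bar> \<le> (1::real)"
    unfolding Cb_inf_iff_Cb_upto by (auto intro: Cb_upto_tanh abs_tanh_le_1)
  define s where "s = supnorm (deriv tanh) powr (1 - 1/real d)"
  have "\<bar>deriv tanh 0\<bar> \<le> supnorm (deriv tanh)"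
    using tanh(1) by (intro abs_le_supnorm) (meson Cb_inf_iff_Cb_upto Cb_upto_Suc Cb_upto_bounded)
  moreover have "deriv tanh 0 = (1::real)"
    using DERIV_imp_deriv[OF tanh_real_has_derivative[of 0]] by simp
  ultimately have s: "s > 0" unfolding s_def by simp
  have "(\<integral>t. \<rho> t * deriv tanh t \<partial>lborel) \<le> K * s"
    unfolding s_def by (rule density_deriv_boundD[OF assms tanh])
  moreover have "(\<integral>t. \<rho> t * deriv (\<lambda>x. -1 * tanh x) t \<partial>lborel)
      \<le> K * supnorm (deriv (\<lambda>x. -1 * tanh x)) powr (1 - 1/real d)"
    by (rule density_deriv_boundD[OF assms Cb_inf_cmult[OF tanh(1)]]) (simp add: tanh(2))
  then have "- (\<integral>t. \<rho> t * deriv tanh t \<partial>lborel) \<le> K * s"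
    unfolding Cb_inf_deriv_cmult[OF tanh(1)] s_def supnorm_def by simp
  ultimately have "0 \<le> K * s" by simp
  then show ?thesis using s by (simp add: zero_le_mult_iff)
qed

lemma density_deriv_bound_scaled:
  assumes SB: "density_deriv_bound \<rho> K d" and d: "d \<ge> 1"
    and \<theta>: "Cb_inf \<theta>" "\<And>x. \<bar>\<theta> x\<bar> \<le> L" "\<And>x. \<bar>deriv \<theta> x\<bar> \<le> D" and L: "L > 0"
  shows "(\<integral>t. \<rho> t * deriv \<theta> t \<partial>lborel) \<le> K * L * (D / L) powr (1 - 1/real d)"
proof -
  define \<eta> where "\<eta> = (\<lambda>x. (1/L) * \<theta> x)"
  have \<eta>: "Cb_inf \<eta>" "deriv \<eta> = (\<lambda>x. (1/L) * deriv \<theta> x)"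
    unfolding \<eta>_def by (rule Cb_inf_cmult[OF \<theta>(1)], rule Cb_inf_deriv_cmult[OF \<theta>(1)])
  have "(\<integral>t. \<rho> t * deriv \<eta> t \<partial>lborel) \<le> K * supnorm (deriv \<eta>) powr (1 - 1/real d)"
    by (rule density_deriv_boundD[OF SB \<eta>(1)]) (use L \<theta>(2) in \<open>auto simp: \<eta>_def abs_mult\<close>)
  also have "\<dots> \<le> K * (D / L) powr (1 - 1/real d)"
  proof (intro mult_left_mono powr_mono2 density_deriv_bound_nonneg[OF SB])
    show "0 \<le> supnorm (deriv \<eta>)"
      using abs_le_supnorm[of "deriv \<eta>" 0] \<eta>(1)
      by (meson Cb_inf_iff_Cb_upto Cb_upto_Suc Cb_upto_bounded abs_ge_zero order_trans)
    show "supnorm (deriv \<eta>) \<le> D / L"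
      unfolding \<eta>(2) using \<theta>(3) L by (intro supnorm_le) (auto simp: abs_mult divide_right_mono)
  qed (use d in auto)
  finally show ?thesis
    using L unfolding \<eta>(2) by (simp add: divide_le_eq mult_ac)
qed

text \<open>Testing against primitives of smoothed indicators bounds the mass of finite unions of
  grid cells; dyadic approximation from inside and outer regularity extend the bound to all
  Borel sets of finite measure.\<close>
lemma density_deriv_bound_grid_bump:
  assumes SB: "density_deriv_bound \<rho> K d" and d: "d \<ge> 1" and J: "finite J" "J \<noteq> {}"
    and w: "w > 0" and \<delta>: "\<delta> > 0"
  shows "(\<integral>t. \<rho> t * grid_bump J w \<delta> t \<partial>lborel) \<le> K * (real (card J) * w / 2) powr (1/real d)"
proof -
  let ?L = "real (card J) * w / 2"
  have L: "?L > 0" using J w by (simp add: card_gt_0_iff)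
  have "(\<integral>t. \<rho> t * deriv (grid_bump_primitive J w \<delta>) t \<partial>lborel) \<le> K * ?L * (1 / ?L) powr (1 - 1/real d)"
  proof (rule density_deriv_bound_scaled[OF SB d Cb_inf_grid_bump_primitive[OF J(1) \<delta>] _ _ L])
    show "\<bar>grid_bump_primitive J w \<delta> x\<bar> \<le> ?L" for x
      using abs_grid_bump_primitive_le[OF \<delta>] w by simp
    show "\<bar>deriv (grid_bump_primitive J w \<delta>) x\<bar> \<le> 1" for x
      using deriv_grid_bump_primitive[of \<delta>] grid_bump_nonneg[OF \<delta>, of w J x]
        grid_bump_le_1[OF J(1) \<delta>, of w x] \<delta> w by simp
  qed (use w in auto)
  moreover have "?L * (1 / ?L) powr (1 - 1/real d) = ?L powr (1/real d)"
    using L by (simp add: powr_divide powr_diff powr_minus_divide field_simps)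
  ultimately show ?thesis
    using \<delta> by (simp add: deriv_grid_bump_primitive mult.assoc)
qed

lemma density_deriv_bound_grid_union:
  assumes SB: "density_deriv_bound \<rho> K d" and d: "d \<ge> 1" and J: "finite J" and w: "w > 0"
    and \<rho>: "integrable lborel \<rho>" "\<And>t. \<rho> t \<ge> 0"
  shows "(\<integral>t. \<rho> t * indicator (grid_union J w) t \<partial>lborel) \<le> K * (real (card J) * w / 2) powr (1/real d)"
proof (cases "J = {}")
  case True then show ?thesis using density_deriv_bound_nonneg[OF SB] by (simp add: grid_union_def)
next
  case False
  have bump: "0 \<le> grid_bump J w (1 / (real n + 1)) t \<and> grid_bump J w (1 / (real n + 1)) t \<le> 1" for n t
    using grid_bump_nonneg grid_bump_le_1[OF J] w by simp
  show ?thesis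
  proof (rule integral_le_of_dominated_limit[OF \<rho>(1)])
    show "(\<lambda>t. \<rho> t * grid_bump J w (1 / (real n + 1)) t) \<in> borel_measurable lborel" for n
      using \<rho>(1) Cb_upto_borel_measurable[OF Cb_upto_grid_bump[OF J, of 0]] by auto
    show "AE t in lborel. (\<lambda>n. \<rho> t * grid_bump J w (1 / (real n + 1)) t)
                          \<longlonglongrightarrow> \<rho> t * indicator (grid_union J w) t"
      using AE_not_on_grid by (rule AE_mp) (auto intro!: tendsto_mult tendsto_const tendsto_grid_bump J w)
    show "AE t in lborel. norm (\<rho> t * grid_bump J w (1 / (real n + 1)) t) \<le> \<rho> t" for n
      using bump \<rho>(2) by (simp add: abs_mult mult_left_le)
    show "(\<integral>t. \<rho> t * grid_bump J w (1 / (real n + 1)) t \<partial>lborel)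
          \<le> K * (real (card J) * w / 2) powr (1/real d)" for n
      by (rule density_deriv_bound_grid_bump[OF SB d J False w]) simp
  qed (use \<rho>(1) in auto)
qed

lemma density_deriv_bound_open:
  assumes SB: "density_deriv_bound \<rho> K d" and d: "d \<ge> 1"
    and \<rho>: "integrable lborel \<rho>" "\<And>t. \<rho> t \<ge> 0"
    and U: "open U" "emeasure lborel U < \<infinity>"
  shows "(\<integral>t. \<rho> t * indicator U t \<partial>lborel) \<le> K * (measure lborel U / 2) powr (1/real d)"
proof -
  let ?G = "\<lambda>n. grid_union (dyadic_cells U n) ((1/2)^n)"
  have Ub: "U \<in> sets borel" using U(1) by simp
  show ?thesis
  proof (rule integral_le_of_dominated_limit[OF \<rho>(1)])
    show "AE t in lborel. (\<lambda>n. \<rho> t * indicator (?G n) t) \<longlonglongrightarrow> \<rho> t * indicator U t"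
      using AE_not_on_dyadic_grid
      by (rule AE_mp) (auto intro!: tendsto_mult tendsto_const tendsto_indicator_dyadic_cells U(1))
    show "(\<lambda>t. \<rho> t * indicator U t) \<in> borel_measurable lborel"
      using \<rho>(1) Ub by (auto intro!: borel_measurable_times borel_measurable_indicator)
    show "(\<lambda>t. \<rho> t * indicator (?G n) t) \<in> borel_measurable lborel" for n
      using \<rho>(1) by (auto intro!: borel_measurable_times borel_measurable_indicator)
    show "AE t in lborel. norm (\<rho> t * indicator (?G n) t) \<le> \<rho> t" for n
      using \<rho>(2) by (auto simp: indicator_def)
    show "(\<integral>t. \<rho> t * indicator (?G n) t \<partial>lborel) \<le> K * (measure lborel U / 2) powr (1/real d)" for n
    proof -
      have "real (card (dyadic_cells U n)) * (1/2)^n = measure lborel (?G n)"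
        by (simp add: measure_grid_union finite_dyadic_cells)
      also have "\<dots> \<le> measure lborel U"
        using U Ub by (intro measure_mono_fmeasurable[OF grid_union_dyadic_cells_subset])
          (auto intro: fmeasurableI)
      finally have "K * (real (card (dyadic_cells U n)) * (1/2)^n / 2) powr (1/real d)
             \<le> K * (measure lborel U / 2) powr (1/real d)"
        by (intro mult_left_mono density_deriv_bound_nonneg[OF SB] powr_mono2 divide_right_mono) auto
      with density_deriv_bound_grid_union[OF SB d finite_dyadic_cells _ \<rho>, of "(1/2)^n" U n]
      show ?thesis by simp
    qed
  qed
qed

lemma density_deriv_bound_set_integral:
  assumes SB: "density_deriv_bound \<rho> K d" and d: "d \<ge> 1"
    and \<rho>: "integrable lborel \<rho>" "\<And>t. \<rho> t \<ge> 0"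
    and A: "A \<in> sets borel" "emeasure lborel A < \<infinity>"
  shows "(\<integral>t. \<rho> t * indicator A t \<partial>lborel) \<le> K * (measure lborel A / 2) powr (1/real d)"
proof -
  have K: "K \<ge> 0" by (rule density_deriv_bound_nonneg[OF SB])
  have approx: "(\<integral>t. \<rho> t * indicator A t \<partial>lborel) \<le> K * ((measure lborel A + e) / 2) powr (1/real d)"
    if e: "e > 0" for e
  proof -
    obtain U where U: "open U" "A \<subseteq> U" "emeasure lborel (U - A) < e"
      using outer_regular_lborel[OF A(1) e] by blast
    have Ub: "U \<in> sets borel" using U by auto
    have fUA: "emeasure lborel (U - A) < \<infinity>" using U(3) by (simp add: less_trans)
    have "emeasure lborel U \<le> emeasure lborel A + emeasure lborel (U - A)"
      using U(2) emeasure_subadditive[of A lborel "U - A"] Ub A(1) by (simp add: Un_absorb1)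
    also have "\<dots> < \<infinity>" using A(2) fUA by (simp add: ennreal_add_less_top)
    finally have Uf: "emeasure lborel U < \<infinity>" .
    have "measure lborel U - measure lborel A = measure lborel (U - A)"
      by (rule measure_Diff[symmetric]) (use Uf Ub A U in auto)
    also have "\<dots> < e"
      using U(3) fUA e by (simp add: emeasure_eq_ennreal_measure ennreal_less_iff)
    finally have mU: "measure lborel U \<le> measure lborel A + e" by simp
    have "(\<integral>t. \<rho> t * indicator A t \<partial>lborel) \<le> (\<integral>t. \<rho> t * indicator U t \<partial>lborel)"
      using \<rho> U(2) by (intro integral_mono integrable_real_mult_indicator) (auto simp: Ub A indicator_def)
    also have "\<dots> \<le> K * (measure lborel U / 2) powr (1/real d)"
      by (rule density_deriv_bound_open[OF SB d \<rho> U(1) Uf])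
    also have "\<dots> \<le> K * ((measure lborel A + e) / 2) powr (1/real d)"
      using mU K by (intro mult_left_mono powr_mono2 divide_right_mono) auto
    finally show ?thesis .
  qed
  have "(\<lambda>n. K * ((measure lborel A + 1 / real (Suc n)) / 2) powr (1/real d))
      \<longlonglongrightarrow> K * ((measure lborel A + 0) / 2) powr (1/real d)"
    using d by (intro tendsto_intros LIMSEQ_Suc[OF lim_inverse_n']) auto
  then show ?thesis
    by (intro LIMSEQ_le_const[of _ "K * (measure lborel A / 2) powr (1/real d)"]) (use approx in auto)
qed

section \<open>Total variation and smooth test functions\<close>

definition smooth_unit_ball :: "(real \<Rightarrow> real) set" where
  "smooth_unit_ball = {\<phi>. Cb_inf \<phi> \<and> (\<forall>x. \<bar>\<phi> x\<bar> \<le> 1)}"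

definition smooth_lipschitz_unit_ball :: "(real \<Rightarrow> real) set" where
  "smooth_lipschitz_unit_ball = {\<phi> \<in> smooth_unit_ball. \<forall>x. \<bar>deriv \<phi> x\<bar> \<le> 1}"

lemma zero_in_smooth_lipschitz_unit_ball: "(\<lambda>x. 0) \<in> smooth_lipschitz_unit_ball"
  by (simp add: smooth_lipschitz_unit_ball_def smooth_unit_ball_def Cb_inf_iff_Cb_upto Cb_upto_const)

lemma smooth_lipschitz_unit_ball_subset: "smooth_lipschitz_unit_ball \<subseteq> smooth_unit_ball"
  unfolding smooth_lipschitz_unit_ball_def by blast

lemma integrable_mult_bounded:
  fixes h :: "real \<Rightarrow> real"
  assumes h: "integrable lborel h" and \<phi>: "\<phi> \<in> borel_measurable borel" "\<And>t. \<bar>\<phi> t\<bar> \<le> B"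
  shows "integrable lborel (\<lambda>t. h t * \<phi> t)"
proof (rule Bochner_Integration.integrable_bound[of lborel "\<lambda>t. B * h t"])
  show "AE t in lborel. norm (h t * \<phi> t) \<le> norm (B * h t)"
  proof (rule AE_I2)
    fix t
    have "\<bar>h t\<bar> * \<bar>\<phi> t\<bar> \<le> \<bar>h t\<bar> * B" by (intro mult_left_mono \<phi>) simp
    moreover have "B \<ge> 0" using \<phi>(2)[of t] by simp
    ultimately show "norm (h t * \<phi> t) \<le> norm (B * h t)" by (simp add: abs_mult mult.commute)
  qed
qed (use h \<phi> in simp_all)

lemma integral_mult_le_integral_abs:
  fixes h :: "real \<Rightarrow> real"
  assumes "integrable lborel h" "\<phi> \<in> borel_measurable borel" "\<And>t. \<bar>\<phi> t\<bar> \<le> 1"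
  shows "(\<integral>t. h t * \<phi> t \<partial>lborel) \<le> (\<integral>t. \<bar>h t\<bar> \<partial>lborel)"
proof (rule integral_mono)
  have "\<bar>h t * \<phi> t\<bar> \<le> \<bar>h t\<bar>" for t
    using assms(3)[of t] by (simp add: abs_mult mult_left_le)
  then show "h t * \<phi> t \<le> \<bar>h t\<bar>" for t
    by (simp add: abs_le_iff)
qed (use integrable_mult_bounded[OF assms] assms(1) in simp_all)

lemma bdd_above_smooth_pairing:
  fixes h :: "real \<Rightarrow> real"
  assumes "integrable lborel h"
  shows "bdd_above ((\<lambda>\<phi>. \<integral>t. h t * \<phi> t \<partial>lborel) ` smooth_unit_ball)"
  using integral_mult_le_integral_abs[OF assms] Cb_inf_borel_measurable
  by (intro bdd_aboveI2) (auto simp: smooth_unit_ball_def)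

lemma integral_density_diff:
  fixes rf rg :: "real \<Rightarrow> real"
  assumes f: "integrable lborel rf" "\<And>t. rf t \<ge> 0" and g: "integrable lborel rg" "\<And>t. rg t \<ge> 0"
    and \<phi>: "\<phi> \<in> borel_measurable borel" "\<And>x. \<bar>\<phi> x\<bar> \<le> 1"
  shows "(\<integral>x. \<phi> x \<partial>density lborel (\<lambda>t. ennreal (rf t))) - (\<integral>x. \<phi> x \<partial>density lborel (\<lambda>t. ennreal (rg t)))
       = (\<integral>t. (rf t - rg t) * \<phi> t \<partial>lborel)"
proof -
  have int: "integrable lborel (\<lambda>t. r t * \<phi> t)" if "integrable lborel r" for r
    using that \<phi> by (rule integrable_mult_bounded)
  have "(\<integral>x. \<phi> x \<partial>density lborel (\<lambda>t. ennreal (r t))) = (\<integral>t. r t * \<phi> t \<partial>lborel)"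
    if "integrable lborel r" "\<And>t. r t \<ge> 0" for r
    using integral_density[of \<phi> lborel r] that \<phi> by simp
  then show ?thesis
    using int[OF f(1)] int[OF g(1)] f g by (simp add: left_diff_distrib)
qed

lemma TV_dist_density:
  fixes rf rg :: "real \<Rightarrow> real"
  assumes f: "integrable lborel rf" "\<And>t. rf t \<ge> 0" and g: "integrable lborel rg" "\<And>t. rg t \<ge> 0"
  shows "TV_dist (density lborel (\<lambda>t. ennreal (rf t))) (density lborel (\<lambda>t. ennreal (rg t)))
       = (SUP \<phi>\<in>smooth_unit_ball. \<integral>t. (rf t - rg t) * \<phi> t \<partial>lborel)"
proof -
  have "TV_dist (density lborel (\<lambda>t. ennreal (rf t))) (density lborel (\<lambda>t. ennreal (rg t)))
    = (SUP \<phi>\<in>smooth_unit_ball. (\<integral>x. \<phi> x \<partial>density lborel (\<lambda>t. ennreal (rf t)))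
                               - (\<integral>x. \<phi> x \<partial>density lborel (\<lambda>t. ennreal (rg t))))"
    unfolding TV_dist_def smooth_unit_ball_def by (rule arg_cong[where f=Sup]) blast
  also have "\<dots> = (SUP \<phi>\<in>smooth_unit_ball. \<integral>t. (rf t - rg t) * \<phi> t \<partial>lborel)"
    using integral_density_diff[OF f g] Cb_inf_borel_measurable
    by (intro SUP_cong) (auto simp: smooth_unit_ball_def)
  finally show ?thesis .
qed

lemma FM_dist_density:
  fixes rf rg :: "real \<Rightarrow> real"
  assumes f: "integrable lborel rf" "\<And>t. rf t \<ge> 0" and g: "integrable lborel rg" "\<And>t. rg t \<ge> 0"
  shows "FM_dist (density lborel (\<lambda>t. ennreal (rf t))) (density lborel (\<lambda>t. ennreal (rg t)))
       = (SUP \<phi>\<in>smooth_lipschitz_unit_ball. \<integral>t. (rf t - rg t) * \<phi> t \<partial>lborel)"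
proof -
  have "FM_dist (density lborel (\<lambda>t. ennreal (rf t))) (density lborel (\<lambda>t. ennreal (rg t)))
    = (SUP \<phi>\<in>smooth_lipschitz_unit_ball. (\<integral>x. \<phi> x \<partial>density lborel (\<lambda>t. ennreal (rf t)))
                               - (\<integral>x. \<phi> x \<partial>density lborel (\<lambda>t. ennreal (rg t))))"
    unfolding FM_dist_def smooth_lipschitz_unit_ball_def smooth_unit_ball_def
    by (rule arg_cong[where f=Sup]) blast
  also have "\<dots> = (SUP \<phi>\<in>smooth_lipschitz_unit_ball. \<integral>t. (rf t - rg t) * \<phi> t \<partial>lborel)"
    using integral_density_diff[OF f g] Cb_inf_borel_measurable
    by (intro SUP_cong) (auto simp: smooth_lipschitz_unit_ball_def smooth_unit_ball_def)
  finally show ?thesis .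
qed

lemma le_SUP_smooth_pairing:
  fixes h :: "real \<Rightarrow> real"
  shows "integrable lborel h \<Longrightarrow> \<phi> \<in> smooth_unit_ball \<Longrightarrow>
     (\<integral>t. h t * \<phi> t \<partial>lborel) \<le> (SUP \<phi>\<in>smooth_unit_ball. \<integral>t. h t * \<phi> t \<partial>lborel)"
  by (rule cSUP_upper[OF _ bdd_above_smooth_pairing])

lemma signed_grid_bump_in_smooth_unit_ball:
  assumes "finite J" "\<delta> > 0" "w \<ge> 0"
  shows "(\<lambda>t. 2 * grid_bump J w \<delta> t - 1) \<in> smooth_unit_ball"
proof -
  have "Cb_upto k (\<lambda>t. 2 * grid_bump J w \<delta> t + (-1))" for k
    by (intro Cb_upto_add Cb_upto_cmult Cb_upto_grid_bump Cb_upto_const assms)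
  then show ?thesis
    using grid_bump_nonneg[of \<delta> w J] grid_bump_le_1[OF assms]
    by (auto simp: smooth_unit_ball_def Cb_inf_iff_Cb_upto abs_le_iff assms)
qed

lemma integral_signed_grid_union_le_SUP_smooth:
  fixes h :: "real \<Rightarrow> real"
  assumes h: "integrable lborel h" and J: "finite J" and w: "w > 0"
  shows "(\<integral>t. h t * (2 * indicator (grid_union J w) t - 1) \<partial>lborel)
       \<le> (SUP \<phi>\<in>smooth_unit_ball. \<integral>t. h t * \<phi> t \<partial>lborel)"
proof (rule integral_le_of_dominated_limit[where w="\<lambda>t. \<bar>h t\<bar>"])
  let ?\<psi> = "\<lambda>n t. 2 * grid_bump J w (1 / (real n + 1)) t - 1"
  have \<psi>: "?\<psi> n \<in> smooth_unit_ball" for n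
    using w by (intro signed_grid_bump_in_smooth_unit_ball J) auto
  show "AE t in lborel. (\<lambda>n. h t * ?\<psi> n t) \<longlonglongrightarrow> h t * (2 * indicator (grid_union J w) t - 1)"
    using AE_not_on_grid by (rule AE_mp) (auto intro!: tendsto_intros tendsto_grid_bump J w)
  show "(\<lambda>t. h t * ?\<psi> n t) \<in> borel_measurable lborel" for n
    using h \<psi>[of n] by (auto simp: smooth_unit_ball_def dest: Cb_inf_borel_measurable)
  show "AE t in lborel. norm (h t * ?\<psi> n t) \<le> \<bar>h t\<bar>" for n
    using \<psi>[of n] by (auto simp: smooth_unit_ball_def abs_mult mult_left_le)
  show "(\<integral>t. h t * ?\<psi> n t \<partial>lborel) \<le> (SUP \<phi>\<in>smooth_unit_ball. \<integral>t. h t * \<phi> t \<partial>lborel)" for n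
    by (rule le_SUP_smooth_pairing[OF h \<psi>])
qed (use h in auto)

lemma integral_signed_open_le_SUP_smooth:
  fixes h :: "real \<Rightarrow> real"
  assumes h: "integrable lborel h" and U: "open U"
  shows "(\<integral>t. h t * (2 * indicator U t - 1) \<partial>lborel)
       \<le> (SUP \<phi>\<in>smooth_unit_ball. \<integral>t. h t * \<phi> t \<partial>lborel)"
proof (rule integral_le_of_dominated_limit[where w="\<lambda>t. \<bar>h t\<bar>"])
  let ?G = "\<lambda>n. grid_union (dyadic_cells U n) ((1/2)^n)"
  show "AE t in lborel. (\<lambda>n. h t * (2 * indicator (?G n) t - 1)) \<longlonglongrightarrow> h t * (2 * indicator U t - 1)"
    using AE_not_on_dyadic_grid by (rule AE_mp) (auto intro!: tendsto_intros tendsto_indicator_dyadic_cells U)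
  show "(\<lambda>t. h t * (2 * indicator (?G n) t - 1)) \<in> borel_measurable lborel" for n
    using h by measurable
  show "(\<lambda>t. h t * (2 * indicator U t - 1)) \<in> borel_measurable lborel"
    using h U by (auto intro!: borel_measurable_times borel_measurable_diff borel_measurable_indicator)
  show "AE t in lborel. norm (h t * (2 * indicator (?G n) t - 1)) \<le> \<bar>h t\<bar>" for n
    by (auto simp: indicator_def abs_mult)
  show "(\<integral>t. h t * (2 * indicator (?G n) t - 1) \<partial>lborel) \<le> (SUP \<phi>\<in>smooth_unit_ball. \<integral>t. h t * \<phi> t \<partial>lborel)" for n
    by (rule integral_signed_grid_union_le_SUP_smooth[OF h finite_dyadic_cells]) simp
qed (use h in auto)

lemma open_superset_small_weighted_measure:
  fixes r :: "real \<Rightarrow> real"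
  assumes r: "integrable lborel r" "\<And>t. r t \<ge> 0" and P: "P \<in> sets borel" and e: "e > 0"
  obtains U where "open U" "P \<subseteq> U" "(\<integral>t. r t * indicator (U - P) t \<partial>lborel) < e"
proof -
  define \<nu> where "\<nu> = density lborel (\<lambda>t. ennreal (r t))"
  have s\<nu>: "sets \<nu> = sets borel" unfolding \<nu>_def by simp
  have \<nu>: "emeasure \<nu> A = ennreal (\<integral>t. r t * indicator A t \<partial>lborel)" if "A \<in> sets borel" for A
  proof -
    have "emeasure \<nu> A = (\<integral>\<^sup>+t. ennreal (r t * indicator A t) \<partial>lborel)"
      unfolding \<nu>_def using r that
      by (subst emeasure_density) (auto intro!: nn_integral_cong simp: indicator_def)
    also have "\<dots> = ennreal (\<integral>t. r t * indicator A t \<partial>lborel)"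
      using r that by (intro nn_integral_eq_integral integrable_real_mult_indicator) auto
    finally show ?thesis .
  qed
  have "emeasure \<nu> (space \<nu>) \<noteq> \<infinity>"
    using \<nu>[of UNIV] by (simp add: sets_eq_imp_space_eq[OF s\<nu>])
  from outer_regular[OF s\<nu> this P] have "emeasure \<nu> P = (INF U \<in> {U. P \<subseteq> U \<and> open U}. emeasure \<nu> U)" .
  moreover have "emeasure \<nu> P < emeasure \<nu> P + ennreal e"
    using \<nu>[OF P] e by (simp add: ennreal_plus[symmetric] del: ennreal_plus)
  ultimately obtain U where U: "P \<subseteq> U" "open U" "emeasure \<nu> U < emeasure \<nu> P + ennreal e"
    by (metis (no_types, lifting) INF_less_iff mem_Collect_eq)
  have Ub: "U \<in> sets borel" using U by auto
  have "emeasure \<nu> P + emeasure \<nu> (U - P) = emeasure \<nu> U"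
    using U(1) by (subst plus_emeasure) (auto simp: s\<nu> P Ub Un_absorb1)
  with U(3) have "emeasure \<nu> P + emeasure \<nu> (U - P) < emeasure \<nu> P + ennreal e"
    by simp
  then have "emeasure \<nu> (U - P) < ennreal e"
    by (simp add: ennreal_add_left_cancel_less)
  moreover have "0 \<le> (\<integral>t. r t * indicator (U - P) t \<partial>lborel)"
    using r by (intro integral_nonneg_AE) (auto simp: indicator_def)
  ultimately have "(\<integral>t. r t * indicator (U - P) t \<partial>lborel) < e"
    using \<nu>[of "U - P"] Ub P by (simp add: ennreal_less_iff)
  with U that show ?thesis by blast
qed

text \<open>Approximating \<open>sgn h\<close> by \<open>2 \<one>\<^sub>U - 1\<close> with \<open>U\<close> an open neighbourhood of \<open>{h > 0}\<close>
  whose excess carries little of the measure \<open>\<bar>h\<bar> dt\<close>.\<close>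
lemma integral_abs_le_SUP_smooth:
  fixes h :: "real \<Rightarrow> real"
  assumes h: "integrable lborel h"
  shows "(\<integral>t. \<bar>h t\<bar> \<partial>lborel) \<le> (SUP \<phi>\<in>smooth_unit_ball. \<integral>t. h t * \<phi> t \<partial>lborel)"
proof (rule field_le_epsilon)
  fix e :: real assume e: "e > 0"
  define P where "P = {t. h t > 0}"
  have P: "P \<in> sets borel" unfolding P_def using h by measurable
  obtain U where U: "open U" "P \<subseteq> U" and small: "(\<integral>t. \<bar>h t\<bar> * indicator (U - P) t \<partial>lborel) < e / 2"
    using open_superset_small_weighted_measure[of "\<lambda>t. \<bar>h t\<bar>" P "e / 2"] h P e by auto
  have Ub: "U \<in> sets borel" using U by auto
  have nonpos: "t \<notin> U \<Longrightarrow> h t \<le> 0" for t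
    using U(2) unfolding P_def by (meson mem_Collect_eq not_le subsetD)
  have "h t * (2 * indicator U t - 1) = \<bar>h t\<bar> - 2 * (\<bar>h t\<bar> * indicator (U - P) t)" for t
    using nonpos[of t] by (auto simp: P_def indicator_def abs_if)
  then have "(\<integral>t. h t * (2 * indicator U t - 1) \<partial>lborel)
      = (\<integral>t. \<bar>h t\<bar> \<partial>lborel) - 2 * (\<integral>t. \<bar>h t\<bar> * indicator (U - P) t \<partial>lborel)"
    using h Ub P by (simp add: integrable_real_mult_indicator)
  with integral_signed_open_le_SUP_smooth[OF h U(1)] small
  show "(\<integral>t. \<bar>h t\<bar> \<partial>lborel) \<le> (SUP \<phi>\<in>smooth_unit_ball. \<integral>t. h t * \<phi> t \<partial>lborel) + e"
    by linarith
qed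

section \<open>\<open>L\<^sup>p\<close> bounds from level-set inequalities\<close>

lemma nn_integral_cmult_powr_Icc:
  assumes p: "p > 0" and a: "a \<ge> 0" and c: "c \<ge> 0"
  shows "(\<integral>\<^sup>+s. ennreal (c * s powr (p - 1)) * indicator {0..a} s \<partial>lborel) = ennreal (c * (a powr p / p))"
proof -
  have "((\<lambda>s. s powr (p - 1)) has_integral (a powr (p - 1 + 1) / (p - 1 + 1))) {0..a}"
    by (rule has_integral_powr_from_0) (use p a in auto)
  then have "((\<lambda>s. c * s powr (p - 1)) has_integral (c * (a powr p / p))) {0..a}"
    by (intro has_integral_mult_right) simp
  then show ?thesis
    by (rule nn_integral_has_integral_lebesgue'[rotated]) (use c in auto)
qed

lemma nn_integral_cmult_powr_Ici:
  assumes p: "p < 0" and a: "a > 0" and c: "c \<ge> 0"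
  shows "(\<integral>\<^sup>+s. ennreal (c * s powr (p - 1)) * indicator {a..} s \<partial>lborel) = ennreal (c * (a powr p / - p))"
proof -
  have "((\<lambda>s. s powr (p - 1)) has_integral -(a powr (p - 1 + 1)) / (p - 1 + 1)) {a..}"
    by (rule has_integral_powr_to_inf) (use p a in auto)
  then have "((\<lambda>s. c * s powr (p - 1)) has_integral (c * (a powr p / - p))) {a..}"
    by (intro has_integral_mult_right) (simp add: field_simps)
  then show ?thesis
    by (rule nn_integral_has_integral_lebesgue'[rotated]) (use c a in auto)
qed

lemma nn_integral_powr_le_layer_cake:
  fixes h F :: "real \<Rightarrow> real"
  assumes hb: "h \<in> borel_measurable borel" and h0: "\<And>t. h t \<ge> 0" and p: "p > 0"
    and F: "\<And>s. s > 0 \<Longrightarrow> emeasure lborel {t. s \<le> h t} \<le> ennreal (F s)"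
  shows "(\<integral>\<^sup>+t. ennreal (h t powr p) \<partial>lborel)
       \<le> (\<integral>\<^sup>+s. ennreal (p * s powr (p - 1)) * ennreal (F s) * indicator {0<..} s \<partial>lborel)"
proof -
  define G where "G t s = ennreal (p * s powr (p - 1)) * indicator {0..h t} s" for t s :: real
  have Gm: "case_prod G \<in> borel_measurable (lborel \<Otimes>\<^sub>M lborel)"
  proof -
    note hb[measurable]
    have "case_prod G = (\<lambda>x. ennreal (p * snd x powr (p - 1)) * (if 0 \<le> snd x \<and> snd x \<le> h (fst x) then 1 else 0))"
      unfolding G_def by (auto simp: indicator_def fun_eq_iff)
    also have "\<dots> \<in> borel_measurable (lborel \<Otimes>\<^sub>M lborel)" by measurable
    finally show ?thesis .
  qed
  have "(\<integral>\<^sup>+t. ennreal (h t powr p) \<partial>lborel) = (\<integral>\<^sup>+t. (\<integral>\<^sup>+s. G t s \<partial>lborel) \<partial>lborel)"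
    unfolding G_def using nn_integral_cmult_powr_Icc[OF p h0, of p] p
    by (intro nn_integral_cong) simp
  also have "\<dots> = (\<integral>\<^sup>+s. (\<integral>\<^sup>+t. G t s \<partial>lborel) \<partial>lborel)"
    by (rule lborel_pair.Fubini'[symmetric, OF Gm])
  also have "\<dots> \<le> (\<integral>\<^sup>+s. ennreal (p * s powr (p - 1)) * ennreal (F s) * indicator {0<..} s \<partial>lborel)"
  proof (intro nn_integral_mono)
    fix s :: real
    have "(\<integral>\<^sup>+t. G t s \<partial>lborel)
        = (\<integral>\<^sup>+t. (ennreal (p * s powr (p - 1)) * indicator {0..} s) * indicator {t. s \<le> h t} t \<partial>lborel)"
      unfolding G_def by (intro nn_integral_cong) (auto simp: indicator_def)
    also have "\<dots> = ennreal (p * s powr (p - 1)) * indicator {0..} s * emeasure lborel {t. s \<le> h t}"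
      by (rule nn_integral_cmult_indicator) (use hb in measurable)
    also have "\<dots> \<le> ennreal (p * s powr (p - 1)) * ennreal (F s) * indicator {0<..} s"
      using F[of s] by (cases "s > 0") (auto simp: indicator_def intro: mult_left_mono)
    finally show "(\<integral>\<^sup>+t. G t s \<partial>lborel) \<le> ennreal (p * s powr (p - 1)) * ennreal (F s) * indicator {0<..} s" .
  qed
  finally show ?thesis .
qed

lemma nn_integral_powr_eq_0:
  fixes h :: "real \<Rightarrow> real"
  assumes "h \<in> borel_measurable borel" "\<And>t. h t \<ge> 0" "p > 0"
    and "\<And>s. s > 0 \<Longrightarrow> emeasure lborel {t. s \<le> h t} = 0"
  shows "(\<integral>\<^sup>+t. ennreal (h t powr p) \<partial>lborel) = 0"
  using nn_integral_powr_le_layer_cake[OF assms(1-3), of "\<lambda>_. 0"] assms(4) by simp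

lemma nn_integral_powr_le_two_tails:
  fixes h :: "real \<Rightarrow> real"
  assumes hb: "h \<in> borel_measurable borel" and h0: "\<And>t. h t \<ge> 0" and p: "1 < p" "p < q"
    and a: "a > 0" and T: "T \<ge> 0" and K: "K \<ge> 0"
    and small: "\<And>s. s > 0 \<Longrightarrow> emeasure lborel {t. s \<le> h t} \<le> ennreal (T / s)"
    and large: "\<And>s. s > a \<Longrightarrow> emeasure lborel {t. s \<le> h t} \<le> ennreal (K * s powr (- q))"
  shows "(\<integral>\<^sup>+t. ennreal (h t powr p) \<partial>lborel)
       \<le> ennreal (p * T * (a powr (p - 1) / (p - 1)) + p * K * (a powr (p - q) / (q - p)))"
proof -
  define F where "F s = (if s \<le> a then T / s else K * s powr (-q))" for s
  have "(\<integral>\<^sup>+t. ennreal (h t powr p) \<partial>lborel)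
      \<le> (\<integral>\<^sup>+s. ennreal (p * s powr (p - 1)) * ennreal (F s) * indicator {0<..} s \<partial>lborel)"
    by (rule nn_integral_powr_le_layer_cake[OF hb h0]) (use p small large in \<open>auto simp: F_def\<close>)
  also have "\<dots> \<le> (\<integral>\<^sup>+s. ennreal (p * T * s powr (p - 1 - 1)) * indicator {0..a} s
                      + ennreal (p * K * s powr (p - q - 1)) * indicator {a..} s \<partial>lborel)"
  proof (intro nn_integral_mono)
    fix s :: real
    show "ennreal (p * s powr (p - 1)) * ennreal (F s) * indicator {0<..} s
       \<le> ennreal (p * T * s powr (p - 1 - 1)) * indicator {0..a} s
         + ennreal (p * K * s powr (p - q - 1)) * indicator {a..} s"
    proof (cases "s > 0")
      case s: True
      have "ennreal (p * s powr (p - 1)) * ennreal (F s) = ennreal (p * s powr (p - 1) * F s)"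
        using s p T K by (intro ennreal_mult[symmetric]) (auto simp: F_def)
      moreover have "p * s powr (p - 1) * F s = p * T * s powr (p - 1 - 1)" if "s \<le> a"
        using that s by (simp add: F_def powr_diff field_simps power2_eq_square)
      moreover have "p * s powr (p - 1) * F s = p * K * s powr (p - q - 1)" if "\<not> s \<le> a"
        using that by (simp add: F_def powr_add[symmetric] algebra_simps)
      ultimately show ?thesis
        using s by (cases "s \<le> a") (auto simp: indicator_def intro: add_increasing2)
    qed simp
  qed
  also have "\<dots> = ennreal (p * T * (a powr (p - 1) / (p - 1))) + ennreal (p * K * (a powr (p - q) / - (p - q)))"
    using nn_integral_cmult_powr_Icc[of "p - 1" a "p * T"] nn_integral_cmult_powr_Ici[of "p - q" a "p * K"] p a T K
    by (subst nn_integral_add) auto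
  finally show ?thesis
    using a p T K by (simp add: ennreal_plus[symmetric] del: ennreal_plus)
qed

lemma level_ineq_imp_measure_le:
  fixes m s K :: real and d :: nat
  assumes d: "d > 1" and m: "m \<ge> 0" and s: "s > 0" and K: "K \<ge> 0"
    and ineq: "s * m \<le> K * m powr (1 / real d)"
  shows "m \<le> K powr (real d / (real d - 1)) * s powr - (real d / (real d - 1))"
proof (cases "m = 0")
  case False
  with m have m0: "m > 0" by simp
  let ?q = "real d / (real d - 1)"
  have "s * (m powr (1 - 1 / real d) * m powr (1 / real d)) \<le> K * m powr (1 / real d)"
    using ineq m0 by (simp add: powr_add[symmetric])
  then have "m powr (1 - 1 / real d) \<le> K / s"
    using s m0 by (simp add: field_simps)
  then have "(m powr (1 - 1 / real d)) powr ?q \<le> (K / s) powr ?q"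
    using d by (intro powr_mono2) auto
  moreover have "(m powr (1 - 1 / real d)) powr ?q = m"
    using d m0 by (simp add: powr_powr field_simps)
  ultimately show ?thesis
    using s K by (simp add: powr_divide powr_minus_divide)
qed simp

lemma optimal_split_identity:
  fixes K T p d :: real
  assumes K: "K > 0" and T: "T > 0" and d: "d > 1"
  defines "a \<equiv> K powr d * T powr (- (d - 1))" and "q \<equiv> d / (d - 1)"
  shows "T * a powr (p - 1) = K powr (d * (p - 1)) * T powr (1 - (d - 1) * (p - 1))"
    and "K powr q * a powr (p - q) = K powr (d * (p - 1)) * T powr (1 - (d - 1) * (p - 1))"
proof -
  have a: "a powr x = K powr (d * x) * T powr (- (d - 1) * x)" for x
    unfolding a_def using K T by (simp add: powr_mult powr_powr)
  have dq: "(d - 1) * q = d" unfolding q_def using d by simp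
  show "T * a powr (p - 1) = K powr (d * (p - 1)) * T powr (1 - (d - 1) * (p - 1))"
    unfolding a using T by (simp add: powr_mult_base algebra_simps)
  have "K powr q * a powr (p - q) = K powr (q + d * (p - q)) * T powr (- (d - 1) * (p - q))"
    unfolding a by (simp add: powr_add)
  moreover have "q + d * (p - q) = d * (p - 1)" "- (d - 1) * (p - q) = 1 - (d - 1) * (p - 1)"
    using dq by (simp_all add: algebra_simps)
  ultimately show "K powr q * a powr (p - q) = K powr (d * (p - 1)) * T powr (1 - (d - 1) * (p - 1))"
    by simp
qed

text \<open>The first factor of \<open>C\<^sub>1(d, p)\<close>, raised to the power \<open>p\<close>.\<close>
definition Lp_const :: "nat \<Rightarrow> real \<Rightarrow> real" where
  "Lp_const d p = p / (p - 1) + (if d = 1 then 0 else p / (real d / (real d - 1) - p))"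

lemma Lp_const_nonneg: "1 < p \<Longrightarrow> d = 1 \<or> p < real d / (real d - 1) \<Longrightarrow> Lp_const d p \<ge> 0"
  unfolding Lp_const_def by auto

lemma nn_integral_powr_le_of_power_tail:
  fixes h :: "real \<Rightarrow> real" and d :: nat
  assumes hb: "h \<in> borel_measurable borel" and h0: "\<And>t. h t \<ge> 0" and p: "p > 1"
    and d: "d > 1" and p_lt: "p < real d / (real d - 1)" and T: "T > 0" and K: "K > 0"
    and markov: "\<And>s. s > 0 \<Longrightarrow> emeasure lborel {t. s \<le> h t} \<le> ennreal (T / s)"
    and tail: "\<And>s. s > 0 \<Longrightarrow>
       emeasure lborel {t. s \<le> h t} \<le> ennreal (K powr (real d / (real d - 1)) * s powr - (real d / (real d - 1)))"
  shows "(\<integral>\<^sup>+t. ennreal (h t powr p) \<partial>lborel)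
       \<le> ennreal (Lp_const d p * K powr (real d * (p - 1)) * T powr (1 - (real d - 1) * (p - 1)))"
proof -
  define q where "q = real d / (real d - 1)"
  \<comment> \<open>the level at which the two tail bounds \<open>T/s\<close> and \<open>K\<^sup>q s\<^sup>-\<^sup>q\<close> cross\<close>
  define a where "a = K powr real d * T powr (- (real d - 1))"
  have a: "a > 0" unfolding a_def using K T by simp
  have "(\<integral>\<^sup>+t. ennreal (h t powr p) \<partial>lborel)
      \<le> ennreal (p * T * (a powr (p - 1) / (p - 1)) + p * (K powr q) * (a powr (p - q) / (q - p)))"
    using p_lt T K a tail unfolding q_def
    by (intro nn_integral_powr_le_two_tails[OF hb h0 p _ a _ _ markov]) auto
  also have "p * T * (a powr (p - 1) / (p - 1)) + p * (K powr q) * (a powr (p - q) / (q - p))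
      = Lp_const d p * K powr (real d * (p - 1)) * T powr (1 - (real d - 1) * (p - 1))"
    using optimal_split_identity[of K T "real d" p] K T d
    unfolding a_def q_def Lp_const_def by (simp add: field_simps)
  finally show ?thesis .
qed

lemma nn_integral_powr_le_of_level_ineq:
  fixes h :: "real \<Rightarrow> real" and d :: nat
  assumes hb: "h \<in> borel_measurable borel" and h0: "\<And>t. h t \<ge> 0" and d: "d \<ge> 1" and p: "p > 1"
    and p_lt: "d = 1 \<or> p < real d / (real d - 1)" and T: "T \<ge> 0" and K: "K \<ge> 0"
    and markov: "\<And>s. s > 0 \<Longrightarrow> emeasure lborel {t. s \<le> h t} \<le> ennreal (T / s)"
    and level: "\<And>s. s > 0 \<Longrightarrow>
       s * measure lborel {t. s \<le> h t} \<le> K * measure lborel {t. s \<le> h t} powr (1 / real d)"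
  shows "(\<integral>\<^sup>+t. ennreal (h t powr p) \<partial>lborel)
       \<le> ennreal (Lp_const d p * K powr (real d * (p - 1)) * T powr (1 - (real d - 1) * (p - 1)))"
proof -
  let ?m = "\<lambda>s. measure lborel {t. s \<le> h t}"
  have em: "emeasure lborel {t. s \<le> h t} = ennreal (?m s)" if "s > 0" for s
    using markov[OF that] by (intro emeasure_eq_ennreal_measure) (auto simp: top_unique)
  consider "K = 0 \<or> T = 0" | "K > 0" "T > 0" "d = 1" | "K > 0" "T > 0" "d > 1"
    using K T d by linarith
  then show ?thesis
  proof cases
    case 1
    have "?m s = 0" if "s > 0" for s
      using 1 markov[OF that] level[OF that] em[OF that] that
      by (auto simp: measure_nonneg zero_le_mult_iff mult_le_0_iff dest: order.antisym)
    then have "(\<integral>\<^sup>+t. ennreal (h t powr p) \<partial>lborel) = 0"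
      using em by (intro nn_integral_powr_eq_0[OF hb h0]) (use p in auto)
    then show ?thesis by simp
  next
    case 2
    have "?m s = 0" if "s > K" for s
      using level[of s] that 2 measure_nonneg[of lborel "{t. s \<le> h t}"]
      by (auto simp: mult_le_cancel_right)
    then have "(\<integral>\<^sup>+t. ennreal (h t powr p) \<partial>lborel)
        \<le> ennreal (p * T * (K powr (p - 1) / (p - 1)) + p * 0 * (K powr (p - (p + 1)) / ((p + 1) - p)))"
      using em 2 T markov
      by (intro nn_integral_powr_le_two_tails[OF hb h0 p, where q="p + 1" and a=K and K=0]) auto
    then show ?thesis
      using 2 by (simp add: Lp_const_def field_simps)
  next
    case 3
    show ?thesis
      using level_ineq_imp_measure_le[OF 3(3) _ _ K level] em 3 p_lt
      by (intro nn_integral_powr_le_of_power_tail[OF hb h0 p 3(3) _ 3(2,1) markov]) (auto intro: ennreal_leI)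
  qed
qed

lemma measure_level_set_density_diff:
  fixes rf rg :: "real \<Rightarrow> real"
  assumes f: "integrable lborel rf" "\<And>t. rf t \<ge> 0" and g: "integrable lborel rg" "\<And>t. rg t \<ge> 0"
    and SBf: "density_deriv_bound rf Kf d" and SBg: "density_deriv_bound rg Kg d" and d: "d \<ge> 1"
    and A: "A \<in> sets borel" "emeasure lborel A < \<infinity>" "\<And>t. t \<in> A \<Longrightarrow> s \<le> \<bar>rf t - rg t\<bar>"
  shows "s * measure lborel A \<le> (Kf + Kg) * measure lborel A powr (1 / real d)"
proof -
  have Kf: "Kf \<ge> 0" and Kg: "Kg \<ge> 0"
    using density_deriv_bound_nonneg SBf SBg by blast+
  have "s * measure lborel A = (\<integral>t. s * indicator A t \<partial>lborel)"
    using A by (simp add: emeasure_eq_ennreal_measure less_top)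
  also have "\<dots> \<le> (\<integral>t. rf t * indicator A t + rg t * indicator A t \<partial>lborel)"
  proof (rule integral_mono)
    show "integrable lborel (\<lambda>t. s * indicator A t)" using A by (simp add: integrable_indicator_iff)
    show "integrable lborel (\<lambda>t. rf t * indicator A t + rg t * indicator A t)"
      using f g A by (intro Bochner_Integration.integrable_add integrable_real_mult_indicator) auto
    show "s * indicator A t \<le> rf t * indicator A t + rg t * indicator A t" for t
      using f(2)[of t] g(2)[of t] A(3)[of t] by (auto simp: indicator_def)
  qed
  also have "\<dots> = (\<integral>t. rf t * indicator A t \<partial>lborel) + (\<integral>t. rg t * indicator A t \<partial>lborel)"
    using f g A by (intro Bochner_Integration.integral_add integrable_real_mult_indicator) auto
  also have "\<dots> \<le> Kf * (measure lborel A / 2) powr (1 / real d) + Kg * (measure lborel A / 2) powr (1 / real d)"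
    by (intro add_mono density_deriv_bound_set_integral[OF SBf d f A(1,2)]
        density_deriv_bound_set_integral[OF SBg d g A(1,2)])
  also have "\<dots> \<le> (Kf + Kg) * measure lborel A powr (1 / real d)"
    using Kf Kg powr_mono2[of "1 / real d" "measure lborel A / 2" "measure lborel A"]
    by (simp add: distrib_right add_mono mult_left_mono)
  finally show ?thesis .
qed

lemma Lp_bound_density_diff:
  fixes rf rg :: "real \<Rightarrow> real"
  assumes f: "integrable lborel rf" "\<And>t. rf t \<ge> 0" and g: "integrable lborel rg" "\<And>t. rg t \<ge> 0"
    and SBf: "density_deriv_bound rf Kf d" and SBg: "density_deriv_bound rg Kg d"
    and d: "d \<ge> 1" and p: "p > 1" and p_lt: "d = 1 \<or> p < real d / (real d - 1)"
  shows "integrable lborel (\<lambda>t. \<bar>rf t - rg t\<bar> powr p)"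
    and "(\<integral>t. \<bar>rf t - rg t\<bar> powr p \<partial>lborel)
      \<le> Lp_const d p * (Kf + Kg) powr (real d * (p - 1))
          * (\<integral>t. \<bar>rf t - rg t\<bar> \<partial>lborel) powr (1 - (real d - 1) * (p - 1))"
proof -
  let ?h = "\<lambda>t. \<bar>rf t - rg t\<bar>"
  let ?T = "\<integral>t. ?h t \<partial>lborel"
  let ?B = "Lp_const d p * (Kf + Kg) powr (real d * (p - 1)) * ?T powr (1 - (real d - 1) * (p - 1))"
  have hi: "integrable lborel ?h" using f g by simp
  have hb: "?h \<in> borel_measurable borel" using hi by auto
  have markov: "emeasure lborel {t. s \<le> ?h t} \<le> ennreal (?T / s)" if "s > 0" for s
    using integral_Markov_inequality[OF hi _ that] by simp
  have bound: "(\<integral>\<^sup>+t. ennreal (?h t powr p) \<partial>lborel) \<le> ennreal ?B"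
  proof (rule nn_integral_powr_le_of_level_ineq[OF hb _ d p p_lt _ _ markov])
    show "s * measure lborel {t. s \<le> ?h t} \<le> (Kf + Kg) * measure lborel {t. s \<le> ?h t} powr (1 / real d)"
      if "s > 0" for s
      using markov[OF that] hb
      by (intro measure_level_set_density_diff[OF f g SBf SBg d]) (auto simp: le_less_trans)
    show "0 \<le> Kf + Kg" using density_deriv_bound_nonneg SBf SBg by (simp add: add_nonneg_nonneg)
  qed simp_all
  show int: "integrable lborel (\<lambda>t. ?h t powr p)"
    using bound hb by (intro integrableI_nonneg) (auto simp: le_less_trans)
  have "ennreal (\<integral>t. ?h t powr p \<partial>lborel) = (\<integral>\<^sup>+t. ennreal (?h t powr p) \<partial>lborel)"
    by (rule nn_integral_eq_integral[OF int, symmetric]) simp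
  with bound have "ennreal (\<integral>t. ?h t powr p \<partial>lborel) \<le> ennreal ?B" by simp
  moreover have "0 \<le> ?B" using Lp_const_nonneg[OF p p_lt] by simp
  ultimately show "(\<integral>t. ?h t powr p \<partial>lborel) \<le> ?B" by (simp add: ennreal_le_iff)
qed

section \<open>Smoothing and the Fortet--Mourier distance\<close>

lemma continuous_imp_has_antiderivative:
  fixes \<phi> :: "real \<Rightarrow> real"
  assumes c: "continuous_on UNIV \<phi>"
  obtains F where "\<And>x. (F has_real_derivative \<phi> x) (at x)"
proof -
  define F where "F x = integral {0..x} \<phi> - integral {x..0} \<phi>" for x
  have "(F has_real_derivative \<phi> t) (at t)" for t
  proof -
    define a where "a = min t 0 - 1"
    define b where "b = max t 0 + 1"
    have ab: "a < t" "t < b" "a < 0" "0 < b" unfolding a_def b_def by auto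
    have int: "\<phi> integrable_on {u..v}" for u v
      by (rule integrable_continuous_interval, rule continuous_on_subset[OF c]) simp
    have eq: "integral {a..x} \<phi> - integral {a..0} \<phi> = F x" if x: "x \<in> {a<..<b}" for x
    proof (cases "x \<ge> 0")
      case True
      have "integral {a..0} \<phi> + integral {0..x} \<phi> = integral {a..x} \<phi>"
        by (rule Henstock_Kurzweil_Integration.integral_combine) (use ab True int in auto)
      moreover have "integral {x..0} \<phi> = 0"
        using True by (cases "x = 0") auto
      ultimately show ?thesis unfolding F_def by simp
    next
      case False
      have "integral {a..x} \<phi> + integral {x..0} \<phi> = integral {a..0} \<phi>"
        by (rule Henstock_Kurzweil_Integration.integral_combine) (use x False int in auto)
      moreover have "{0..x} = {}" using False by auto
      ultimately show ?thesis unfolding F_def by simp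
    qed
    have "((\<lambda>x. integral {a..x} \<phi>) has_real_derivative \<phi> t) (at t within {a..b})"
      by (rule integral_has_real_derivative) (use c ab in \<open>auto intro: continuous_on_subset\<close>)
    then have "((\<lambda>x. integral {a..x} \<phi> - integral {a..0} \<phi>) has_real_derivative \<phi> t) (at t)"
      using at_within_Icc_at[OF ab(1,2)] by (auto intro!: derivative_eq_intros)
    then show ?thesis
      by (rule has_field_derivative_transform_within_open[where S="{a<..<b}"]) (use ab eq in auto)
  qed
  then show ?thesis using that by blast
qed

lemma shift_has_real_derivative:
  assumes "\<And>y. (G has_real_derivative g y) (at y)"
  shows "((\<lambda>y. G (y + c)) has_real_derivative g (x + c)) (at x)"
  using DERIV_chain2[OF assms[of "x + c"] DERIV_add[OF DERIV_ident DERIV_const[of c]]] by simp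

text \<open>A second-order Taylor bound, proved by comparing the remainder with \<open>\<plusminus>s\<^sup>2/2\<close>.\<close>
lemma abs_taylor_remainder_le:
  fixes F G :: "real \<Rightarrow> real"
  assumes G: "\<And>y. (G has_real_derivative F y) (at y)" and F: "\<And>y. \<bar>F (x + y) - F x\<bar> \<le> \<bar>y\<bar>"
    and e: "\<epsilon> \<ge> 0"
  shows "\<bar>G (x + \<epsilon>) - G x - \<epsilon> * F x\<bar> \<le> \<epsilon>\<^sup>2 / 2"
proof -
  define u where "u s = G (x + s) - G x - s * F x" for s
  have du: "(u has_real_derivative F (x + s) - F x) (at s)" for s
    using shift_has_real_derivative[OF G, of x s] unfolding u_def[abs_def]
    by (auto intro!: derivative_eq_intros simp: add.commute)
  have cu: "continuous_on {0..\<epsilon>} u"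
    using du by (meson DERIV_isCont continuous_at_imp_continuous_on)
  have "(\<lambda>s. s\<^sup>2 / 2 + c * u s) 0 \<le> (\<lambda>s. s\<^sup>2 / 2 + c * u s) \<epsilon>" if "\<bar>c\<bar> = 1" for c
  proof (rule DERIV_nonneg_imp_increasing_open[of 0 \<epsilon>])
    show "\<exists>y. ((\<lambda>s. s\<^sup>2 / 2 + c * u s) has_real_derivative y) (at s) \<and> 0 \<le> y" if "0 < s" "s < \<epsilon>" for s
      using F[of s] \<open>\<bar>c\<bar> = 1\<close> that
      by (intro exI[of _ "s + c * (F (x + s) - F x)"] conjI)
         (auto intro!: derivative_eq_intros du simp: abs_if split: if_splits)
    show "continuous_on {0..\<epsilon>} (\<lambda>s. s\<^sup>2 / 2 + c * u s)"
      by (intro continuous_intros cu) auto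
  qed (use e in auto)
  from this[of 1] this[of "-1"] have "0 \<le> \<epsilon>\<^sup>2 / 2 + u \<epsilon>" "0 \<le> \<epsilon>\<^sup>2 / 2 - u \<epsilon>"
    by (simp_all add: u_def)
  then show ?thesis unfolding u_def[symmetric] abs_le_iff by linarith
qed

lemma window_average_properties:
  fixes \<phi> F :: "real \<Rightarrow> real"
  assumes F: "\<And>x. (F has_real_derivative \<phi> x) (at x)"
    and \<phi>: "Cb_inf \<phi>" "\<And>x. \<bar>\<phi> x\<bar> \<le> 1" and e: "\<epsilon> > 0"
  defines "\<phi>\<^sub>\<epsilon> \<equiv> \<lambda>x. (F (x + \<epsilon>) - F x) / \<epsilon>"
  shows "Cb_inf \<phi>\<^sub>\<epsilon>" "\<And>x. \<bar>\<phi>\<^sub>\<epsilon> x\<bar> \<le> 1" "\<And>x. \<bar>deriv \<phi>\<^sub>\<epsilon> x\<bar> \<le> 2 / \<epsilon>"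
proof -
  define \<phi>\<^sub>\<epsilon>' where "\<phi>\<^sub>\<epsilon>' x = (1/\<epsilon>) * \<phi> (1 * x + \<epsilon>) + (-1/\<epsilon>) * \<phi> x" for x
  have d\<phi>\<^sub>\<epsilon>: "(\<phi>\<^sub>\<epsilon> has_real_derivative \<phi>\<^sub>\<epsilon>' x) (at x)" for x
    unfolding \<phi>\<^sub>\<epsilon>_def \<phi>\<^sub>\<epsilon>'_def
    using DERIV_cdivide[OF DERIV_diff[OF shift_has_real_derivative[OF F] F], of \<epsilon>]
    by (simp add: diff_divide_distrib)
  show bound: "\<bar>\<phi>\<^sub>\<epsilon> x\<bar> \<le> 1" for x
    using DERIV_abs_bound[OF F \<phi>(2), of "x + \<epsilon>" x] e unfolding \<phi>\<^sub>\<epsilon>_def by (simp add: abs_divide)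
  have "Cb_upto k \<phi>\<^sub>\<epsilon>'" for k
    using \<phi>(1) unfolding \<phi>\<^sub>\<epsilon>'_def[abs_def] Cb_inf_iff_Cb_upto
    by (intro Cb_upto_add Cb_upto_cmult Cb_upto_affine_comp) auto
  then have "Cb_upto (Suc k) \<phi>\<^sub>\<epsilon>" for k
    using bound by (intro Cb_upto_SucI[OF d\<phi>\<^sub>\<epsilon>]) (auto simp: bounded_range_real_iff)
  then show "Cb_inf \<phi>\<^sub>\<epsilon>" unfolding Cb_inf_iff_Cb_upto using Cb_upto_SucD by blast
  show "\<bar>deriv \<phi>\<^sub>\<epsilon> x\<bar> \<le> 2 / \<epsilon>" for x
  proof -
    have "deriv \<phi>\<^sub>\<epsilon> x = (\<phi> (x + \<epsilon>) - \<phi> x) / \<epsilon>"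
      using DERIV_imp_deriv[OF d\<phi>\<^sub>\<epsilon>[of x]] by (simp add: \<phi>\<^sub>\<epsilon>'_def diff_divide_distrib)
    moreover have "\<bar>\<phi> (x + \<epsilon>) - \<phi> x\<bar> \<le> 2"
      using \<phi>(2)[of "x + \<epsilon>"] \<phi>(2)[of x] by (simp add: abs_le_iff)
    ultimately show ?thesis using e by (simp add: abs_divide divide_right_mono)
  qed
qed

text \<open>Splitting \<open>\<phi>\<close> into its average \<open>\<phi>\<^sub>\<epsilon>\<close> over windows of length \<open>\<epsilon>\<close>, whose derivative is
  of order \<open>1/\<epsilon>\<close>, and the derivative of a function \<open>\<Psi>\<close> of size \<open>\<epsilon>\<close>.\<close>
lemma smoothing_decomposition:
  fixes \<phi> :: "real \<Rightarrow> real"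
  assumes \<phi>: "Cb_inf \<phi>" "\<And>x. \<bar>\<phi> x\<bar> \<le> 1" and e: "\<epsilon> > 0"
  obtains \<phi>\<^sub>\<epsilon> \<Psi> where "Cb_inf \<phi>\<^sub>\<epsilon>" "\<And>x. \<bar>\<phi>\<^sub>\<epsilon> x\<bar> \<le> 1" "\<And>x. \<bar>deriv \<phi>\<^sub>\<epsilon> x\<bar> \<le> 2 / \<epsilon>"
    "Cb_inf \<Psi>" "\<And>x. \<bar>\<Psi> x\<bar> \<le> \<epsilon> / 2" "\<And>x. deriv \<Psi> x = \<phi> x - \<phi>\<^sub>\<epsilon> x"
proof -
  obtain F where F: "\<And>x. (F has_real_derivative \<phi> x) (at x)"
    using continuous_imp_has_antiderivative[OF Cb_inf_continuous[OF \<phi>(1)]] by blast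
  then obtain G where G: "\<And>x. (G has_real_derivative F x) (at x)"
    using continuous_imp_has_antiderivative DERIV_isCont continuous_at_imp_continuous_on by metis
  define \<phi>\<^sub>\<epsilon> where "\<phi>\<^sub>\<epsilon> = (\<lambda>x. (F (x + \<epsilon>) - F x) / \<epsilon>)"
  define \<Psi> where "\<Psi> x = F x - (G (x + \<epsilon>) - G x) / \<epsilon>" for x
  have \<phi>\<^sub>\<epsilon>: "Cb_inf \<phi>\<^sub>\<epsilon>" "\<And>x. \<bar>\<phi>\<^sub>\<epsilon> x\<bar> \<le> 1" "\<And>x. \<bar>deriv \<phi>\<^sub>\<epsilon> x\<bar> \<le> 2 / \<epsilon>"
    unfolding \<phi>\<^sub>\<epsilon>_def by (rule window_average_properties[OF F \<phi> e])+
  have d\<Psi>: "(\<Psi> has_real_derivative \<phi> x - \<phi>\<^sub>\<epsilon> x) (at x)" for x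
    unfolding \<Psi>_def[abs_def] \<phi>\<^sub>\<epsilon>_def
    by (rule DERIV_diff[OF F DERIV_cdivide[OF DERIV_diff[OF shift_has_real_derivative[OF G] G]]])
  have bound_\<Psi>: "\<bar>\<Psi> x\<bar> \<le> \<epsilon> / 2" for x
  proof -
    have "\<bar>G (x + \<epsilon>) - G x - \<epsilon> * F x\<bar> \<le> \<epsilon>\<^sup>2 / 2"
      using DERIV_abs_bound[OF F \<phi>(2), of "x + _" x] e by (intro abs_taylor_remainder_le[OF G]) auto
    moreover have "\<Psi> x = - ((G (x + \<epsilon>) - G x - \<epsilon> * F x) / \<epsilon>)"
      unfolding \<Psi>_def using e by (simp add: field_simps)
    ultimately show ?thesis
      using e by (simp add: abs_divide divide_le_eq power2_eq_square)
  qed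
  have "bounded (range \<Psi>)"
    unfolding bounded_range_real_iff using bound_\<Psi> by blast
  moreover have "Cb_upto k (\<lambda>x. \<phi> x - \<phi>\<^sub>\<epsilon> x)" for k
    using \<phi>(1) \<phi>\<^sub>\<epsilon>(1) Cb_upto_add[of k \<phi> "\<lambda>x. -1 * \<phi>\<^sub>\<epsilon> x"] Cb_upto_cmult[of k \<phi>\<^sub>\<epsilon> "-1"]
    unfolding Cb_inf_iff_Cb_upto by simp
  ultimately have "Cb_upto (Suc k) \<Psi>" for k
    by (intro Cb_upto_SucI[OF d\<Psi>])
  then have "Cb_inf \<Psi>" unfolding Cb_inf_iff_Cb_upto using Cb_upto_SucD by blast
  then show ?thesis by (rule that[OF \<phi>\<^sub>\<epsilon> _ bound_\<Psi> DERIV_imp_deriv[OF d\<Psi>]])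
qed

lemma density_deriv_bound_small_primitive:
  assumes SB: "density_deriv_bound \<rho> K d" and d: "d \<ge> 1" and e: "\<epsilon> > 0"
    and \<Psi>: "Cb_inf \<Psi>" "\<And>x. \<bar>\<Psi> x\<bar> \<le> \<epsilon> / 2" "\<And>x. \<bar>deriv \<Psi> x\<bar> \<le> 2"
  shows "(\<integral>t. \<rho> t * deriv \<Psi> t \<partial>lborel) \<le> K * (2 powr (1 - 2 / real d) * \<epsilon> powr (1 / real d))"
proof -
  have "(\<integral>t. \<rho> t * deriv \<Psi> t \<partial>lborel) \<le> K * (\<epsilon> / 2) * (2 / (\<epsilon> / 2)) powr (1 - 1 / real d)"
    using e by (intro density_deriv_bound_scaled[OF SB d \<Psi>]) auto
  moreover have "(\<epsilon> / 2) * (2 / (\<epsilon> / 2)) powr (1 - 1 / real d) = 2 powr (1 - 2 / real d) * \<epsilon> powr (1 / real d)"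
  proof -
    define \<beta> where "\<beta> = 1 - 1 / real d"
    have "(\<epsilon> / 2) * (2 / (\<epsilon> / 2)) powr \<beta> = (\<epsilon> / 2) * ((2 powr 2) powr \<beta> / \<epsilon> powr \<beta>)"
      using e by (simp add: powr_divide)
    also have "\<dots> = (\<epsilon> / \<epsilon> powr \<beta>) * (2 powr (2 * \<beta>) / 2)"
      by (simp only: powr_powr) simp
    also have "\<dots> = \<epsilon> powr (1 - \<beta>) * 2 powr (2 * \<beta> - 1)"
      using e by (simp add: powr_diff)
    also have "1 - \<beta> = 1 / real d" unfolding \<beta>_def by simp
    also have "2 * \<beta> - 1 = 1 - 2 / real d" unfolding \<beta>_def by simp
    finally show ?thesis unfolding \<beta>_def by simp
  qed
  ultimately show ?thesis by (simp add: mult.assoc)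
qed

lemma bdd_above_smooth_lipschitz_pairing:
  fixes h :: "real \<Rightarrow> real"
  assumes "integrable lborel h"
  shows "bdd_above ((\<lambda>\<phi>. \<integral>t. h t * \<phi> t \<partial>lborel) ` smooth_lipschitz_unit_ball)"
  using bdd_above_smooth_pairing[OF assms] image_mono[OF smooth_lipschitz_unit_ball_subset]
  by (rule bdd_above_mono)

lemma smooth_pairing_le_FM_scaled:
  fixes h :: "real \<Rightarrow> real"
  assumes h: "integrable lborel h"
    and \<psi>: "Cb_inf \<psi>" "\<And>x. \<bar>\<psi> x\<bar> \<le> 1" "\<And>x. \<bar>deriv \<psi> x\<bar> \<le> 2 / \<epsilon>" and e: "0 < \<epsilon>" "\<epsilon> \<le> 2"
  shows "(\<integral>t. h t * \<psi> t \<partial>lborel) \<le> (2 / \<epsilon>) * (SUP \<phi>\<in>smooth_lipschitz_unit_ball. \<integral>t. h t * \<phi> t \<partial>lborel)"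
proof -
  have "\<bar>(\<epsilon> / 2) * \<psi> x\<bar> \<le> 1" for x
    using e \<psi>(2)[of x] mult_le_one[of "\<epsilon> / 2" "\<bar>\<psi> x\<bar>"] by (simp add: abs_mult)
  moreover have "\<bar>(\<epsilon> / 2) * deriv \<psi> x\<bar> \<le> 1" for x
    using e mult_left_mono[OF \<psi>(3)[of x], of \<epsilon>] by (simp add: abs_mult)
  ultimately have "(\<lambda>x. (\<epsilon> / 2) * \<psi> x) \<in> smooth_lipschitz_unit_ball"
    unfolding smooth_lipschitz_unit_ball_def smooth_unit_ball_def
    by (simp only: mem_Collect_eq Cb_inf_deriv_cmult[OF \<psi>(1)]) (use Cb_inf_cmult[OF \<psi>(1)] in blast)
  then have "(\<integral>t. h t * ((\<epsilon> / 2) * \<psi> t) \<partial>lborel)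
      \<le> (SUP \<phi>\<in>smooth_lipschitz_unit_ball. \<integral>t. h t * \<phi> t \<partial>lborel)"
    by (rule cSUP_upper[OF _ bdd_above_smooth_lipschitz_pairing[OF h]])
  moreover have "(\<integral>t. h t * ((\<epsilon> / 2) * \<psi> t) \<partial>lborel) = (\<epsilon> / 2) * (\<integral>t. h t * \<psi> t \<partial>lborel)"
    by (simp add: mult.left_commute)
  ultimately show ?thesis
    using e by (simp add: field_simps)
qed

lemma density_diff_pairing_small_primitive:
  fixes rf rg :: "real \<Rightarrow> real"
  assumes f: "integrable lborel rf" and g: "integrable lborel rg"
    and SBf: "density_deriv_bound rf Kf d" and SBg: "density_deriv_bound rg Kg d" and d: "d \<ge> 1"
    and e: "\<epsilon> > 0" and \<Psi>: "Cb_inf \<Psi>" "\<And>x. \<bar>\<Psi> x\<bar> \<le> \<epsilon> / 2" "\<And>x. \<bar>deriv \<Psi> x\<bar> \<le> 2"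
  shows "(\<integral>t. (rf t - rg t) * deriv \<Psi> t \<partial>lborel)
      \<le> (Kf + Kg) * (2 powr (1 - 2 / real d) * \<epsilon> powr (1 / real d))"
proof -
  have d\<Psi>: "deriv \<Psi> \<in> borel_measurable borel"
    by (rule Cb_inf_deriv_borel_measurable[OF \<Psi>(1)])
  have "(\<integral>t. rf t * deriv \<Psi> t \<partial>lborel) \<le> Kf * (2 powr (1 - 2 / real d) * \<epsilon> powr (1 / real d))"
    by (rule density_deriv_bound_small_primitive[OF SBf d e \<Psi>])
  moreover have "(\<integral>t. rg t * deriv (\<lambda>x. -1 * \<Psi> x) t \<partial>lborel)
      \<le> Kg * (2 powr (1 - 2 / real d) * \<epsilon> powr (1 / real d))"
  proof (rule density_deriv_bound_small_primitive[OF SBg d e Cb_inf_cmult[OF \<Psi>(1)]])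
    show "\<bar>deriv (\<lambda>x. -1 * \<Psi> x) x\<bar> \<le> 2" for x
      unfolding Cb_inf_deriv_cmult[OF \<Psi>(1)] using \<Psi>(3)[of x] by simp
  qed (use \<Psi>(2) in simp)
  ultimately show ?thesis
    using integrable_mult_bounded[OF f d\<Psi> \<Psi>(3)] integrable_mult_bounded[OF g d\<Psi> \<Psi>(3)]
    unfolding Cb_inf_deriv_cmult[OF \<Psi>(1)] by (simp add: left_diff_distrib distrib_right)
qed

lemma smooth_pairing_le_FM:
  fixes rf rg :: "real \<Rightarrow> real"
  assumes f: "integrable lborel rf" and g: "integrable lborel rg"
    and SBf: "density_deriv_bound rf Kf d" and SBg: "density_deriv_bound rg Kg d" and d: "d \<ge> 1"
    and \<phi>: "\<phi> \<in> smooth_unit_ball" and e: "0 < \<epsilon>" "\<epsilon> \<le> 2"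
  shows "(\<integral>t. (rf t - rg t) * \<phi> t \<partial>lborel)
      \<le> (2 / \<epsilon>) * (SUP \<psi>\<in>smooth_lipschitz_unit_ball. \<integral>t. (rf t - rg t) * \<psi> t \<partial>lborel)
        + (Kf + Kg) * (2 powr (1 - 2 / real d) * \<epsilon> powr (1 / real d))"
proof -
  let ?h = "\<lambda>t. rf t - rg t"
  have h: "integrable lborel ?h" using f g by simp
  obtain \<phi>\<^sub>\<epsilon> \<Psi> where \<phi>\<^sub>\<epsilon>: "Cb_inf \<phi>\<^sub>\<epsilon>" "\<And>x. \<bar>\<phi>\<^sub>\<epsilon> x\<bar> \<le> 1" "\<And>x. \<bar>deriv \<phi>\<^sub>\<epsilon> x\<bar> \<le> 2 / \<epsilon>"
    and \<Psi>: "Cb_inf \<Psi>" "\<And>x. \<bar>\<Psi> x\<bar> \<le> \<epsilon> / 2" "\<And>x. deriv \<Psi> x = \<phi> x - \<phi>\<^sub>\<epsilon> x"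
    using smoothing_decomposition[of \<phi> \<epsilon>] \<phi> e(1) unfolding smooth_unit_ball_def by blast
  have d\<Psi>: "\<bar>deriv \<Psi> x\<bar> \<le> 2" for x
    using \<phi> \<phi>\<^sub>\<epsilon>(2)[of x] \<Psi>(3)[of x] unfolding smooth_unit_ball_def
    by (smt (verit) mem_Collect_eq)
  have "(\<integral>t. ?h t * \<phi> t \<partial>lborel) = (\<integral>t. ?h t * \<phi>\<^sub>\<epsilon> t + ?h t * deriv \<Psi> t \<partial>lborel)"
    by (simp add: \<Psi>(3) algebra_simps)
  also have "\<dots> = (\<integral>t. ?h t * \<phi>\<^sub>\<epsilon> t \<partial>lborel) + (\<integral>t. ?h t * deriv \<Psi> t \<partial>lborel)"
    using integrable_mult_bounded[OF h Cb_inf_borel_measurable[OF \<phi>\<^sub>\<epsilon>(1)] \<phi>\<^sub>\<epsilon>(2)]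
      integrable_mult_bounded[OF h Cb_inf_deriv_borel_measurable[OF \<Psi>(1)] d\<Psi>]
    by (rule Bochner_Integration.integral_add)
  finally show ?thesis
    using smooth_pairing_le_FM_scaled[OF h \<phi>\<^sub>\<epsilon> e]
      density_diff_pairing_small_primitive[OF f g SBf SBg d e(1) \<Psi>(1,2) d\<Psi>]
    by linarith
qed

lemma smooth_pairing_le_2:
  fixes rf rg :: "real \<Rightarrow> real"
  assumes f: "integrable lborel rf" "\<And>t. rf t \<ge> 0" "(\<integral>t. rf t \<partial>lborel) = 1"
    and g: "integrable lborel rg" "\<And>t. rg t \<ge> 0" "(\<integral>t. rg t \<partial>lborel) = 1"
    and \<phi>: "\<phi> \<in> smooth_unit_ball"
  shows "(\<integral>t. (rf t - rg t) * \<phi> t \<partial>lborel) \<le> 2"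
proof -
  have "(\<integral>t. (rf t - rg t) * \<phi> t \<partial>lborel) \<le> (\<integral>t. \<bar>rf t - rg t\<bar> \<partial>lborel)"
    using f(1) g(1) \<phi> Cb_inf_borel_measurable
    by (intro integral_mult_le_integral_abs) (auto simp: smooth_unit_ball_def)
  also have "\<dots> \<le> (\<integral>t. rf t + rg t \<partial>lborel)"
    using f g by (intro integral_mono) (auto simp: abs_le_iff)
  finally show ?thesis using f g by simp
qed

text \<open>Optimising \<open>y \<le> 2F/\<epsilon> + K \<epsilon>\<^sup>1\<^sup>/\<^sup>d\<close> over \<open>\<epsilon>\<close>: take \<open>\<epsilon> = F\<^sup>d\<^sup>/\<^sup>(\<^sup>d\<^sup>+\<^sup>1\<^sup>)\<close> when \<open>F < 1\<close>.\<close>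
lemma le_of_interpolation_bound:
  fixes y F K Cd :: real
  assumes y: "y \<le> 2" and F: "0 \<le> F" and K: "0 \<le> K" and Cd: "2 + K \<le> Cd" and d: "d \<ge> 1"
    and approx: "\<And>\<epsilon>. 0 < \<epsilon> \<Longrightarrow> \<epsilon> \<le> 2 \<Longrightarrow> y \<le> (2 / \<epsilon>) * F + K * \<epsilon> powr (1 / real d)"
  shows "y \<le> Cd * F powr (1 / (1 + real d))"
proof -
  consider "F \<ge> 1" | "0 < F" "F < 1" | "F = 0" using F by linarith
  then show ?thesis
  proof cases
    case 1
    then have "1 \<le> F powr (1 / (1 + real d))" by (simp add: ge_one_powr_ge_zero)
    then have "Cd * 1 \<le> Cd * F powr (1 / (1 + real d))"
      using Cd K by (intro mult_left_mono) auto
    then show ?thesis using y Cd K by linarith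
  next
    case 2
    define \<epsilon> where "\<epsilon> = F powr (real d / (real d + 1))"
    have "\<epsilon> \<le> 1 powr (real d / (real d + 1))"
      unfolding \<epsilon>_def using 2 by (intro powr_mono2) auto
    then have e: "0 < \<epsilon>" "\<epsilon> \<le> 2" unfolding \<epsilon>_def using 2 by auto
    have "F powr (1 / (1 + real d)) = F powr (1 - real d / (real d + 1))" by (simp add: field_simps)
    then have "F / \<epsilon> = F powr (1 / (1 + real d))"
      unfolding \<epsilon>_def using 2 by (simp add: powr_diff)
    moreover have "\<epsilon> powr (1 / real d) = F powr (1 / (1 + real d))"
      unfolding \<epsilon>_def using d by (simp add: powr_powr field_simps)
    moreover have "(2 / \<epsilon>) * F = 2 * (F / \<epsilon>)" by simp
    ultimately have "(2 / \<epsilon>) * F + K * \<epsilon> powr (1 / real d) = (2 + K) * F powr (1 / (1 + real d))"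
      by (simp only: distrib_right)
    with approx[OF e] Cd show ?thesis
      by (smt (verit) mult_right_mono powr_ge_zero)
  next
    case 3
    have "(\<lambda>n. K * (1 / real (Suc n)) powr (1 / real d)) \<longlonglongrightarrow> K * 0 powr (1 / real d)"
      using d by (intro tendsto_intros LIMSEQ_Suc[OF lim_inverse_n']) auto
    moreover have "y \<le> K * (1 / real (Suc n)) powr (1 / real d)" for n
      using approx[of "1 / real (Suc n)"] 3 by (simp add: divide_le_eq)
    ultimately have "y \<le> 0"
      using d by (intro LIMSEQ_le_const[of _ 0]) auto
    then show ?thesis using 3 by simp
  qed
qed

lemma SUP_smooth_le_FM:
  fixes rf rg :: "real \<Rightarrow> real"
  assumes f: "integrable lborel rf" "\<And>t. rf t \<ge> 0" "(\<integral>t. rf t \<partial>lborel) = 1"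
    and g: "integrable lborel rg" "\<And>t. rg t \<ge> 0" "(\<integral>t. rg t \<partial>lborel) = 1"
    and SBf: "density_deriv_bound rf Kf d" and SBg: "density_deriv_bound rg Kg d" and d: "d \<ge> 1"
    and Cd: "2 + (Kf + Kg) * 2 powr (1 - 2 / real d) \<le> Cd"
  shows "(SUP \<phi>\<in>smooth_unit_ball. \<integral>t. (rf t - rg t) * \<phi> t \<partial>lborel)
      \<le> Cd * (SUP \<psi>\<in>smooth_lipschitz_unit_ball. \<integral>t. (rf t - rg t) * \<psi> t \<partial>lborel) powr (1 / (1 + real d))"
proof (rule cSUP_least)
  show "smooth_unit_ball \<noteq> {}"
    using zero_in_smooth_lipschitz_unit_ball smooth_lipschitz_unit_ball_subset by blast
  fix \<phi> assume \<phi>: "\<phi> \<in> smooth_unit_ball"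
  show "(\<integral>t. (rf t - rg t) * \<phi> t \<partial>lborel)
      \<le> Cd * (SUP \<psi>\<in>smooth_lipschitz_unit_ball. \<integral>t. (rf t - rg t) * \<psi> t \<partial>lborel) powr (1 / (1 + real d))"
  proof (rule le_of_interpolation_bound[OF smooth_pairing_le_2[OF f g \<phi>] _ _ Cd d])
    show "0 \<le> (SUP \<psi>\<in>smooth_lipschitz_unit_ball. \<integral>t. (rf t - rg t) * \<psi> t \<partial>lborel)"
      using cSUP_upper[OF zero_in_smooth_lipschitz_unit_ball bdd_above_smooth_lipschitz_pairing,
          of "\<lambda>t. rf t - rg t"] f(1) g(1) by simp
    show "0 \<le> (Kf + Kg) * 2 powr (1 - 2 / real d)"
      using density_deriv_bound_nonneg[OF SBf] density_deriv_bound_nonneg[OF SBg] by simp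
  qed (use smooth_pairing_le_FM[OF f(1) g(1) SBf SBg d \<phi>] in \<open>simp add: mult_ac\<close>)
qed

section \<open>A Gaussian moment\<close>

lemma has_integral_abs_powr_sym:
  assumes a: "a > 0"
  shows "((\<lambda>t::real. \<bar>t\<bar> powr a) has_integral (2 / (a + 1))) {-1..1}"
proof -
  have "((\<lambda>t. t powr a) has_integral (1 powr (a + 1) / (a + 1))) {0..1}"
    by (rule has_integral_powr_from_0) (use a in auto)
  then have "((\<lambda>t. t powr a) has_integral (1 / (a + 1))) {0..1}" by simp
  then have r: "((\<lambda>t::real. \<bar>t\<bar> powr a) has_integral (1 / (a + 1))) {0..1}"
    by (rule has_integral_eq[rotated]) auto
  then have "((\<lambda>t::real. \<bar>-t\<bar> powr a) has_integral (1 / (a + 1))) {-1..-0}"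
    by (subst has_integral_reflect_real) simp
  then have l: "((\<lambda>t::real. \<bar>t\<bar> powr a) has_integral (1 / (a + 1))) {-1..0}" by simp
  show ?thesis
    using has_integral_combine[OF _ _ l r] by simp
qed

lemma abs_powr_le_1: "\<bar>t\<bar> \<le> 1 \<Longrightarrow> 0 < a \<Longrightarrow> \<bar>t :: real\<bar> powr a \<le> 1"
  using powr_mono2[of a "\<bar>t\<bar>" 1] by simp

lemma integrable_std_normal_abs_powr:
  assumes a: "0 < a" "a \<le> 1"
  shows "integrable lborel (\<lambda>t. std_normal_density t * \<bar>t\<bar> powr a)"
proof (rule Bochner_Integration.integrable_bound)
  show "integrable lborel (\<lambda>t. std_normal_density t + std_normal_density t * \<bar>t\<bar> ^ 1)"
    by (intro Bochner_Integration.integrable_add integrable_std_normal_moment_abs integrable_normal_density) auto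
  have "\<bar>t\<bar> powr a \<le> 1 + \<bar>t\<bar>" for t :: real
    using abs_powr_le_1[of t a] powr_mono[of a 1 "\<bar>t\<bar>"] a by (cases "\<bar>t\<bar> \<le> 1") auto
  then have "std_normal_density t * \<bar>t\<bar> powr a \<le> std_normal_density t * (1 + \<bar>t\<bar>)" for t
    by (intro mult_left_mono) auto
  then show "AE t in lborel. norm (std_normal_density t * \<bar>t\<bar> powr a)
      \<le> norm (std_normal_density t + std_normal_density t * \<bar>t\<bar> ^ 1)"
    by (intro AE_I2) (simp add: abs_mult distrib_left)
qed simp

text \<open>The normal density \<open>\<gamma>\<close> and \<open>\<gamma> \<bar>t\<bar>\<^sup>a\<close> differ only on \<open>[-1, 1]\<close>, where \<open>\<gamma> \<le> 1/\<surd>(2\<pi>)\<close>.\<close>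
lemma std_normal_density_le_abs_powr:
  assumes a: "0 < a"
  shows "std_normal_density t
      \<le> std_normal_density t * \<bar>t\<bar> powr a + 1 / sqrt (2 * pi) * (if t \<in> {-1..1} then 1 - \<bar>t\<bar> powr a else 0)"
proof (cases "t \<in> {-1..1}")
  case True
  have "std_normal_density t \<le> 1 / sqrt (2 * pi)"
    unfolding std_normal_density_def by (simp add: divide_le_eq)
  moreover have "\<bar>t\<bar> powr a \<le> 1" using True a by (intro abs_powr_le_1) auto
  ultimately show ?thesis
    using True mult_right_mono[of "std_normal_density t" "1 / sqrt (2 * pi)" "1 - \<bar>t\<bar> powr a"]
    by (simp add: algebra_simps)
next
  case False
  then have "1 \<le> \<bar>t\<bar> powr a" using a by (intro ge_one_powr_ge_zero) auto
  then show ?thesis using False mult_left_mono[of 1 "\<bar>t\<bar> powr a" "std_normal_density t"]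
    by (simp del: atLeastAtMost_iff)
qed

lemma std_normal_abs_powr_moment_ge:
  assumes a: "0 < a" "a \<le> 1"
  shows "(\<integral>t. std_normal_density t * \<bar>t\<bar> powr a \<partial>lborel) \<ge> 1 - (2 / sqrt (2 * pi)) * (1 - 1 / (1 + a))"
proof -
  let ?c = "1 / sqrt (2 * pi)"
  let ?w = "\<lambda>t::real. if t \<in> {-1..1} then 1 - \<bar>t\<bar> powr a else 0"
  have "(std_normal_density has_integral (\<integral>x. std_normal_density x \<partial>lborel)) UNIV"
    by (rule has_integral_integral_real) simp
  then have "(std_normal_density has_integral 1) UNIV" by simp
  moreover have "((\<lambda>t. std_normal_density t * \<bar>t\<bar> powr a + ?c * ?w t) has_integral
      ((\<integral>t. std_normal_density t * \<bar>t\<bar> powr a \<partial>lborel) + ?c * (2 - 2 / (a + 1)))) UNIV"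
  proof (intro has_integral_add has_integral_integral_real[OF integrable_std_normal_abs_powr[OF a]]
      has_integral_mult_right)
    have "((\<lambda>t. 1 - \<bar>t\<bar> powr a) has_integral (2 - 2 / (a + 1))) {-1..1::real}"
      using has_integral_diff[OF has_integral_const_real[of "1::real" "-1" 1] has_integral_abs_powr_sym[OF a(1)]]
      by simp
    then show "(?w has_integral (2 - 2 / (a + 1))) UNIV"
      unfolding has_integral_restrict_UNIV .
  qed
  ultimately have "1 \<le> (\<integral>t. std_normal_density t * \<bar>t\<bar> powr a \<partial>lborel) + ?c * (2 - 2 / (a + 1))"
    using std_normal_density_le_abs_powr[OF a(1)] by (rule has_integral_le)
  moreover have "?c * (2 - 2 / (a + 1)) = (2 / sqrt (2 * pi)) * (1 - 1 / (1 + a))"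
    by (simp add: field_simps)
  ultimately show ?thesis by linarith
qed

lemma one_plus_le_four_powr: "a \<ge> 0 \<Longrightarrow> 1 + a \<le> (4::real) powr a"
proof -
  assume a: "a \<ge> 0"
  have "ln (exp 1) \<le> ln (3::real)" using exp_le by (subst ln_le_cancel_iff) auto
  then have "1 \<le> ln (3::real)" by simp
  moreover have "ln (3::real) < ln 4" by simp
  ultimately have "1 < ln (4::real)" by linarith
  then have "1 + a \<le> 1 + a * ln 4" using a by (simp add: mult_le_cancel_left1)
  also have "\<dots> \<le> exp (a * ln 4)" by (rule exp_ge_add_one_self)
  finally show ?thesis by (simp add: powr_def)
qed

lemma two_powr_le_gaussian_moment:
  assumes d: "d \<ge> 1"
  shows "2 powr (1 - 2 / real d)
      \<le> 2 * ((2 * pi) powr (- 1 / 2) * (\<integral>t. exp (- t\<^sup>2 / 2) * \<bar>t\<bar> powr (1 / real d) \<partial>lborel))"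
proof -
  define a where "a = 1 / real d"
  have a: "0 < a" "a \<le> 1" unfolding a_def using d by auto
  let ?m = "\<integral>t. std_normal_density t * \<bar>t\<bar> powr a \<partial>lborel"
  have "(2 * pi) powr (- 1 / 2) = 1 / sqrt (2 * pi)"
    by (simp add: powr_minus_divide powr_half_sqrt[symmetric] divide_minus_left powr_minus)
  then have m: "(2 * pi) powr (- 1 / 2) * (\<integral>t. exp (- t\<^sup>2 / 2) * \<bar>t\<bar> powr a \<partial>lborel) = ?m"
    unfolding std_normal_density_def by (simp add: mult.assoc)
  have "2 \<le> sqrt (2 * pi)" by (rule real_le_rsqrt) (use pi_ge_two in simp)
  then have "(2 / sqrt (2 * pi)) * (1 - 1 / (1 + a)) \<le> 1 * (1 - 1 / (1 + a))"
    using a by (intro mult_right_mono) (auto simp: field_simps)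
  then have m_ge: "1 / (1 + a) \<le> ?m"
    using std_normal_abs_powr_moment_ge[OF a] by simp
  have "(4::real) powr a = 2 powr (2 * a)"
    using powr_powr[of 2 2 a] by simp
  then have "2 powr (1 - 2 / real d) = 2 / 4 powr a"
    unfolding a_def by (simp add: powr_diff)
  also have "\<dots> \<le> 2 / (1 + a)"
    using one_plus_le_four_powr[of a] a by (intro divide_left_mono) auto
  also have "\<dots> \<le> 2 * ?m" using m_ge by simp
  finally show ?thesis using m unfolding a_def by simp
qed

text \<open>The constant \<open>C\<^sub>d(\<sigma>\<^sub>f, \<sigma>\<^sub>g)\<close> of the statement dominates the constant
  \<open>2 + (K\<^sub>f + K\<^sub>g) 2\<^sup>1\<^sup>-\<^sup>2\<^sup>/\<^sup>d\<close> that the proof produces.\<close>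
lemma two_plus_le_gaussian_constant:
  assumes "d \<ge> 1" "K \<ge> 0"
  shows "2 + K * 2 powr (1 - 2 / real d)
      \<le> 2 + 2 * K * (2 * pi) powr (- 1 / 2) * (\<integral>t. exp (- t\<^sup>2 / 2) * \<bar>t\<bar> powr (1 / real d) \<partial>lborel)"
  using mult_left_mono[OF two_powr_le_gaussian_moment[OF assms(1)] assms(2)] by (simp add: mult_ac)

lemma Lp_exponent_le_1:
  assumes p: "1 < p" and p_lt: "d = 1 \<or> p < real d / (real d - 1)"
  shows "real d * (1 - 1 / p) \<le> 1"
proof (cases "d = 1")
  case False
  with p p_lt have "real d > 1" by (cases "d = 0") auto
  with False p_lt have "p * (real d - 1) < real d" by (simp add: field_simps)
  with p show ?thesis by (simp add: field_simps)
qed (use p in simp)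

lemma Lp_norm_le_TV_dist:
  fixes rf rg :: "real \<Rightarrow> real"
  assumes f: "integrable lborel rf" "\<And>t. rf t \<ge> 0" and g: "integrable lborel rg" "\<And>t. rg t \<ge> 0"
    and SBf: "density_deriv_bound rf Kf d" and SBg: "density_deriv_bound rg Kg d"
    and d: "d \<ge> 1" and p: "p > 1" and p_lt: "d = 1 \<or> p < real d / (real d - 1)"
  defines "e \<equiv> real d * (1 - 1 / p)"
  shows "(\<integral>t. \<bar>rf t - rg t\<bar> powr p \<partial>lborel) powr (1 / p)
      \<le> Lp_const d p powr (1 / p) * (Kf + Kg) powr e
         * TV_dist (density lborel (\<lambda>t. ennreal (rf t))) (density lborel (\<lambda>t. ennreal (rg t))) powr (1 - e)"
proof -
  let ?TV = "TV_dist (density lborel (\<lambda>t. ennreal (rf t))) (density lborel (\<lambda>t. ennreal (rg t)))"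
  let ?T = "\<integral>t. \<bar>rf t - rg t\<bar> \<partial>lborel"
  define \<beta> where "\<beta> = 1 - (real d - 1) * (p - 1)"
  have \<beta>: "\<beta> / p = 1 - e" and e: "real d * (p - 1) / p = e"
    using p unfolding \<beta>_def e_def by (simp_all add: field_simps)
  then have "0 \<le> \<beta> / p"
    using Lp_exponent_le_1[OF p p_lt] unfolding e_def by linarith
  with p have "\<beta> \<ge> 0" by (simp add: zero_le_divide_iff)
  have K: "Kf + Kg \<ge> 0"
    using density_deriv_bound_nonneg[OF SBf] density_deriv_bound_nonneg[OF SBg] by simp
  have T_le: "?T \<le> ?TV"
    using integral_abs_le_SUP_smooth[of "\<lambda>t. rf t - rg t"] f g by (simp add: TV_dist_density)
  have "(\<integral>t. \<bar>rf t - rg t\<bar> powr p \<partial>lborel) \<le> Lp_const d p * (Kf + Kg) powr (real d * (p - 1)) * ?T powr \<beta>"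
    unfolding \<beta>_def by (rule Lp_bound_density_diff(2)[OF f g SBf SBg d p p_lt])
  also have "\<dots> \<le> Lp_const d p * (Kf + Kg) powr (real d * (p - 1)) * ?TV powr \<beta>"
    using Lp_const_nonneg[OF p p_lt] T_le \<open>\<beta> \<ge> 0\<close> by (intro mult_left_mono powr_mono2) auto
  finally have "(\<integral>t. \<bar>rf t - rg t\<bar> powr p \<partial>lborel) powr (1 / p)
      \<le> (Lp_const d p * (Kf + Kg) powr (real d * (p - 1)) * ?TV powr \<beta>) powr (1 / p)"
    using p by (intro powr_mono2) auto
  also have "\<dots> = Lp_const d p powr (1 / p) * (Kf + Kg) powr e * ?TV powr (1 - e)"
    using Lp_const_nonneg[OF p p_lt] K by (simp add: powr_mult powr_powr \<beta> e)
  finally show ?thesis .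
qed

lemma TV_dist_le_FM_dist:
  fixes rf rg :: "real \<Rightarrow> real"
  assumes f: "integrable lborel rf" "\<And>t. rf t \<ge> 0" "(\<integral>t. rf t \<partial>lborel) = 1"
    and g: "integrable lborel rg" "\<And>t. rg t \<ge> 0" "(\<integral>t. rg t \<partial>lborel) = 1"
    and SBf: "density_deriv_bound rf Kf d" and SBg: "density_deriv_bound rg Kg d" and d: "d \<ge> 1"
    and Cd: "2 + (Kf + Kg) * 2 powr (1 - 2 / real d) \<le> Cd"
  shows "TV_dist (density lborel (\<lambda>t. ennreal (rf t))) (density lborel (\<lambda>t. ennreal (rg t)))
      \<le> Cd * FM_dist (density lborel (\<lambda>t. ennreal (rf t))) (density lborel (\<lambda>t. ennreal (rg t)))
              powr (1 / (1 + real d))"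
  unfolding TV_dist_density[OF f(1,2) g(1,2)] FM_dist_density[OF f(1,2) g(1,2)]
  by (rule SUP_smooth_le_FM[OF f g SBf SBg d Cd])

lemma distr_eq_density_imp_probability_density:
  fixes f :: "'e \<Rightarrow> real"
  assumes "prob_space M" "f \<in> borel_measurable M" "\<rho> \<in> borel_measurable borel" "\<And>t. 0 \<le> \<rho> t"
    and dens: "distr M lborel f = density lborel (\<lambda>t. ennreal (\<rho> t))"
  shows "integrable lborel \<rho>" "(\<integral>t. \<rho> t \<partial>lborel) = 1"
proof -
  interpret prob_space M by fact
  have "emeasure (density lborel (\<lambda>t. ennreal (\<rho> t))) UNIV = 1"
    unfolding dens[symmetric] using assms(2) by (subst emeasure_distr) (auto simp: emeasure_space_1)
  then have nn: "(\<integral>\<^sup>+t. ennreal (\<rho> t) \<partial>lborel) = 1"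
    using assms(3) by (simp add: emeasure_density)
  then show int: "integrable lborel \<rho>"
    using assms(3,4) by (intro integrableI_nonneg) auto
  have "ennreal (\<integral>t. \<rho> t \<partial>lborel) = 1"
    using nn_integral_eq_integral[OF int] assms(4) nn by simp
  then show "(\<integral>t. \<rho> t \<partial>lborel) = 1"
    using assms(4) by (metis ennreal_eq_1 integral_nonneg_AE AE_I2)
qed

lemma sigma_f_pos:
  fixes f :: "'e \<Rightarrow> real"
  assumes "prob_space M" and f: "f \<in> borel_measurable M" "integrable M (\<lambda>x. (f x)\<^sup>2)"
    and nc: "\<not> (\<exists>c. AE x in M. f x = c)"
  shows "sigma_f M f > 0"
proof -
  interpret prob_space M by fact
  let ?m = "\<integral>y. f y \<partial>M"
  have i: "integrable M (\<lambda>x. (f x - ?m)\<^sup>2)"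
  proof (rule Bochner_Integration.integrable_bound[of M "\<lambda>x. 2 * (f x)\<^sup>2 + 2 * ?m\<^sup>2"])
    have "(f x - ?m)\<^sup>2 \<le> 2 * (f x)\<^sup>2 + 2 * ?m\<^sup>2" for x
      using sum_squares_ge_zero[of "f x + ?m" 0] by (simp add: power2_eq_square algebra_simps)
    then show "AE x in M. norm ((f x - ?m)\<^sup>2) \<le> norm (2 * (f x)\<^sup>2 + 2 * ?m\<^sup>2)"
      by simp
  qed (use f in simp_all)
  have "(\<integral>x. (f x - ?m)\<^sup>2 \<partial>M) \<noteq> 0"
  proof
    assume "(\<integral>x. (f x - ?m)\<^sup>2 \<partial>M) = 0"
    then have "AE x in M. (f x - ?m)\<^sup>2 = 0" using integral_nonneg_eq_0_iff_AE[OF i] by simp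
    then have "AE x in M. f x = ?m" by (rule AE_mp) auto
    then show False using nc by blast
  qed
  moreover have "(\<integral>x. (f x - ?m)\<^sup>2 \<partial>M) \<ge> 0" by simp
  ultimately have "(\<integral>x. (f x - ?m)\<^sup>2 \<partial>M) > 0" by linarith
  then show ?thesis unfolding sigma_f_def by simp
qed

lemma density_deriv_bound_image:
  fixes f :: "'e \<Rightarrow> real"
  assumes C: "\<And>\<phi>. Cb_inf \<phi> \<Longrightarrow> (\<forall>x. \<bar>\<phi> x\<bar> \<le> 1) \<Longrightarrow>
           \<sigma> powr (1 / real d) * (\<integral>x. deriv \<phi> (f x) \<partial>M) \<le> C * supnorm (deriv \<phi>) powr (1 - 1 / real d)"
    and \<sigma>: "\<sigma> > 0" and f: "f \<in> borel_measurable M" and \<rho>: "\<rho> \<in> borel_measurable borel" "\<And>t. 0 \<le> \<rho> t"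
    and dens: "distr M lborel f = density lborel (\<lambda>t. ennreal (\<rho> t))"
  shows "density_deriv_bound \<rho> (C * \<sigma> powr (- 1 / real d)) d"
  unfolding density_deriv_bound_def
proof (intro allI impI)
  fix \<theta> assume \<theta>: "Cb_inf \<theta> \<and> (\<forall>x. \<bar>\<theta> x\<bar> \<le> 1)"
  have "(\<integral>x. deriv \<theta> (f x) \<partial>M) = (\<integral>t. deriv \<theta> t \<partial>distr M lborel f)"
    using f \<theta> Cb_inf_deriv_borel_measurable by (subst integral_distr) auto
  also have "\<dots> = (\<integral>t. \<rho> t * deriv \<theta> t \<partial>lborel)"
    unfolding dens using \<theta> \<rho> Cb_inf_deriv_borel_measurable by (subst integral_density) auto
  finally have "\<sigma> powr (1 / real d) * (\<integral>t. \<rho> t * deriv \<theta> t \<partial>lborel)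
      \<le> C * supnorm (deriv \<theta>) powr (1 - 1 / real d)"
    using C \<theta> by metis
  then have "(\<integral>t. \<rho> t * deriv \<theta> t \<partial>lborel)
      \<le> C * supnorm (deriv \<theta>) powr (1 - 1 / real d) / \<sigma> powr (1 / real d)"
    using \<sigma> by (simp add: field_simps mult.commute)
  also have "\<dots> = C * \<sigma> powr (- 1 / real d) * supnorm (deriv \<theta>) powr (1 - 1 / real d)"
    using \<sigma> by (simp add: powr_minus_divide divide_minus_left powr_minus field_simps)
  finally show "(\<integral>t. \<rho> t * deriv \<theta> t \<partial>lborel)
      \<le> C * \<sigma> powr (- 1 / real d) * supnorm (deriv \<theta>) powr (1 - 1 / real d)" .
qed

lemma image_density_properties:
  fixes M :: "'e::{real_vector,t2_space} measure" and f :: "'e \<Rightarrow> real"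
  assumes C: "\<forall>N::'e measure. radon N \<and> log_concave N \<longrightarrow>
        (\<forall>h\<in>Pd N d. \<forall>\<phi>. Cb_inf \<phi> \<and> (\<forall>x. \<bar>\<phi> x\<bar> \<le> 1) \<longrightarrow>
           sigma_f N h powr (1 / real d) * (\<integral>x. deriv \<phi> (h x) \<partial>N)
             \<le> C * supnorm (deriv \<phi>) powr (1 - 1 / real d))"
    and M: "radon M" "log_concave M"
    and f: "f \<in> Pd M d" "\<not> (\<exists>c. AE x in M. f x = c)"
    and \<rho>: "\<rho> \<in> borel_measurable borel" "\<forall>t. 0 \<le> \<rho> t"
    and dens: "distr M lborel f = density lborel (\<lambda>t. ennreal (\<rho> t))"
  shows "integrable lborel \<rho>" "\<And>t. 0 \<le> \<rho> t" "(\<integral>t. \<rho> t \<partial>lborel) = 1" "sigma_f M f > 0"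
    and "density_deriv_bound \<rho> (C * sigma_f M f powr (- 1 / real d)) d" "C \<ge> 0"
proof -
  have P: "prob_space M" using M(2) unfolding log_concave_def by blast
  have fm: "f \<in> borel_measurable M" "integrable M (\<lambda>x. (f x)\<^sup>2)" using f(1) unfolding Pd_def by auto
  show "integrable lborel \<rho>" "(\<integral>t. \<rho> t \<partial>lborel) = 1"
    using distr_eq_density_imp_probability_density[OF P fm(1) \<rho>(1) _ dens] \<rho>(2) by auto
  show "0 \<le> \<rho> t" for t using \<rho>(2) by blast
  show \<sigma>: "sigma_f M f > 0" by (rule sigma_f_pos[OF P fm f(2)])
  show SB: "density_deriv_bound \<rho> (C * sigma_f M f powr (- 1 / real d)) d"
    using C M f(1) \<rho> by (intro density_deriv_bound_image[OF _ \<sigma> fm(1) \<rho>(1) _ dens]) auto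
  show "C \<ge> 0"
    using density_deriv_bound_nonneg[OF SB] \<sigma> by (simp add: zero_le_mult_iff)
qed

lemma TV_dist_density_nonneg:
  fixes rf rg :: "real \<Rightarrow> real"
  assumes "integrable lborel rf" "\<And>t. rf t \<ge> 0" "integrable lborel rg" "\<And>t. rg t \<ge> 0"
  shows "TV_dist (density lborel (\<lambda>t. ennreal (rf t))) (density lborel (\<lambda>t. ennreal (rg t))) \<ge> 0"
  using integral_abs_le_SUP_smooth[of "\<lambda>t. rf t - rg t"] assms
  by (simp add: TV_dist_density) (smt (verit) integral_nonneg_AE AE_I2 abs_ge_zero)

lemma powr_le_of_le_mult_powr:
  fixes x y c a b :: real
  assumes "0 \<le> x" "x \<le> c * y powr a" "0 \<le> b" "0 \<le> c"
  shows "x powr b \<le> c powr b * y powr (a * b)"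
  using powr_mono2[OF assms(3,1,2)] assms(4) by (simp add: powr_mult powr_powr)

lemma TV_dist_powr_le_FM_dist:
  fixes rf rg :: "real \<Rightarrow> real"
  assumes f: "integrable lborel rf" "\<And>t. rf t \<ge> 0" "(\<integral>t. rf t \<partial>lborel) = 1"
    and g: "integrable lborel rg" "\<And>t. rg t \<ge> 0" "(\<integral>t. rg t \<partial>lborel) = 1"
    and SBf: "density_deriv_bound rf Kf d" and SBg: "density_deriv_bound rg Kg d" and d: "d \<ge> 1"
    and Cd: "2 + (Kf + Kg) * 2 powr (1 - 2 / real d) \<le> Cd" and b: "0 \<le> b"
  shows "TV_dist (density lborel (\<lambda>t. ennreal (rf t))) (density lborel (\<lambda>t. ennreal (rg t))) powr b
      \<le> Cd powr b * FM_dist (density lborel (\<lambda>t. ennreal (rf t))) (density lborel (\<lambda>t. ennreal (rg t)))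
              powr (1 / (1 + real d) * b)"
proof (rule powr_le_of_le_mult_powr[OF _ TV_dist_le_FM_dist[OF f g SBf SBg d Cd] b])
  show "0 \<le> TV_dist (density lborel (\<lambda>t. ennreal (rf t))) (density lborel (\<lambda>t. ennreal (rg t)))"
    by (rule TV_dist_density_nonneg[OF f(1,2) g(1,2)])
  have "0 \<le> (Kf + Kg) * 2 powr (1 - 2 / real d)"
    using density_deriv_bound_nonneg[OF SBf] density_deriv_bound_nonneg[OF SBg] by simp
  then show "0 \<le> Cd" using Cd by linarith
qed

theorem corollary5p4:
  fixes d :: nat and C p :: real
    and M :: "'e::{real_vector,t2_space} measure"
    and f g :: "'e \<Rightarrow> real" and \<rho>f \<rho>g :: "real \<Rightarrow> real"
  assumes d_pos: "d \<ge> 1"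
    and E_lc: "lctvs TYPE('e)"
    and C_bound: "\<forall>N::'e measure. radon N \<and> log_concave N \<longrightarrow>
        (\<forall>h\<in>Pd N d. \<forall>\<phi>. Cb_inf \<phi> \<and> (\<forall>x. \<bar>\<phi> x\<bar> \<le> 1) \<longrightarrow>
           sigma_f N h powr (1 / real d) * (\<integral>x. deriv \<phi> (h x) \<partial>N)
             \<le> C * supnorm (deriv \<phi>) powr (1 - 1 / real d))"
    and M_radon: "radon M" and M_lc: "log_concave M"
    and f_P: "f \<in> Pd M d" and g_P: "g \<in> Pd M d"
    and f_nc: "\<not> (\<exists>c. AE x in M. f x = c)"
    and g_nc: "\<not> (\<exists>c. AE x in M. g x = c)"
    and \<rho>f_meas: "\<rho>f \<in> borel_measurable borel" and \<rho>f_nn: "\<forall>t. 0 \<le> \<rho>f t"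
    and \<rho>f_dens: "distr M lborel f = density lborel (\<lambda>t. ennreal (\<rho>f t))"
    and \<rho>g_meas: "\<rho>g \<in> borel_measurable borel" and \<rho>g_nn: "\<forall>t. 0 \<le> \<rho>g t"
    and \<rho>g_dens: "distr M lborel g = density lborel (\<lambda>t. ennreal (\<rho>g t))"
    and p_gt: "1 < p"
    and p_lt: "d = 1 \<or> p < real d / (real d - 1)"
  shows
    "let sf = sigma_f M f; sg = sigma_f M g;
         S = sf powr (- 1 / real d) + sg powr (- 1 / real d);
         e = real d * (1 - 1 / p);
         C1 = (p / (p - 1) + (if d = 1 then 0 else p / (real d / (real d - 1) - p))) powr (1 / p)
                * C powr e;
         Cd = 2 + 2 * C * S * (2 * pi) powr (- 1 / 2)
                * (\<integral>t. exp (- t\<^sup>2 / 2) * \<bar>t\<bar> powr (1 / real d) \<partial>lborel);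
         \<nu>f = distr M lborel f; \<nu>g = distr M lborel g;
         Lp = (\<integral>t. \<bar>\<rho>f t - \<rho>g t\<bar> powr p \<partial>lborel) powr (1 / p)
     in integrable lborel (\<lambda>t. \<bar>\<rho>f t - \<rho>g t\<bar> powr p) \<and>
        Lp \<le> C1 * S powr e * TV_dist \<nu>f \<nu>g powr (1 - e) \<and>
        C1 * S powr e * TV_dist \<nu>f \<nu>g powr (1 - e)
          \<le> C1 * S powr e * Cd powr (1 - e) * FM_dist \<nu>f \<nu>g powr ((1 / (1 + real d)) * (1 - e))"
proof -
  note F = image_density_properties[OF C_bound M_radon M_lc f_P f_nc \<rho>f_meas \<rho>f_nn \<rho>f_dens]
    and G = image_density_properties[OF C_bound M_radon M_lc g_P g_nc \<rho>g_meas \<rho>g_nn \<rho>g_dens]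
  define S where "S = sigma_f M f powr (- 1 / real d) + sigma_f M g powr (- 1 / real d)"
  define e where "e = real d * (1 - 1 / p)"
  define Cd where "Cd = 2 + 2 * C * S * (2 * pi) powr (- 1 / 2)
    * (\<integral>t. exp (- t\<^sup>2 / 2) * \<bar>t\<bar> powr (1 / real d) \<partial>lborel)"
  let ?X = "Lp_const d p powr (1 / p) * C powr e * S powr e"
  let ?TV = "TV_dist (density lborel (\<lambda>t. ennreal (\<rho>f t))) (density lborel (\<lambda>t. ennreal (\<rho>g t)))"
  have KS: "C * sigma_f M f powr (- 1 / real d) + C * sigma_f M g powr (- 1 / real d) = C * S"
    unfolding S_def by (simp add: algebra_simps)
  have CS: "C * S \<ge> 0" "(C * S) powr e = C powr e * S powr e"
    using F(6) unfolding S_def by (simp_all add: powr_mult)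
  have Lp: "(\<integral>t. \<bar>\<rho>f t - \<rho>g t\<bar> powr p \<partial>lborel) powr (1 / p) \<le> ?X * ?TV powr (1 - e)"
    using Lp_norm_le_TV_dist[OF F(1,2) G(1,2) F(5) G(5) d_pos p_gt p_lt]
    unfolding KS e_def[symmetric] CS(2) by (simp add: mult.assoc)
  have "2 + (C * sigma_f M f powr (- 1 / real d) + C * sigma_f M g powr (- 1 / real d))
      * 2 powr (1 - 2 / real d) \<le> Cd"
    using two_plus_le_gaussian_constant[OF d_pos CS(1)] unfolding KS Cd_def by (simp add: mult.assoc)
  from TV_dist_powr_le_FM_dist[OF F(1-3) G(1-3) F(5) G(5) d_pos this] Lp_exponent_le_1[OF p_gt p_lt]
  have TV: "?TV powr (1 - e) \<le> Cd powr (1 - e)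
      * FM_dist (density lborel (\<lambda>t. ennreal (\<rho>f t))) (density lborel (\<lambda>t. ennreal (\<rho>g t)))
          powr (1 / (1 + real d) * (1 - e))"
    unfolding e_def by simp
  show ?thesis
    using Lp_bound_density_diff(1)[OF F(1,2) G(1,2) F(5) G(5) d_pos p_gt p_lt] Lp mult_left_mono[OF TV, of ?X]
    unfolding Let_def \<rho>f_dens \<rho>g_dens S_def[symmetric] e_def[symmetric] Cd_def[symmetric]
      Lp_const_def[symmetric]
    by (simp add: mult.assoc)
qed

end
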